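(* Let $0<a<b<1$ with $a+b=1$, $m\in C^1([0,1])$ non-constant, $c\in C([0,1])$, and assume (H1), (H2) and $m\in S_{\mathcal{D}}$. Then $\liminf_{s\to+\infty}\lambda(s)\ge\lambda^{\mathcal{D}}$.
   Context: Fix an integer $d\ge1$. $\lambda(s)$ denotes the principal eigenvalue of $-\varphi''-\frac{d-1}{r}\varphi'-2s\,m'(r)\varphi'+c(r)\varphi=\lambda\varphi$ on $(0,1)$, $\varphi'(0)=\varphi'(1)=0$; equivalently $\lambda(s)=\min\{\int_0^1 r^{d-1}e^{2sm}(|\varphi'|^2+c\varphi^2)dr:\ \varphi\in H^1((0,1)),\ \int_0^1 r^{d-1}e^{2sm}\varphi^2dr=1\}$. $\lambda^{\mathcal{D}}$ is the principal eigenvalue of $-\varphi''-\frac{d-1}{r}\varphi'+c\varphi=\lambda\varphi$ on $(a,b)$ with Dirichlet boundary conditions, i.e. the minimum of $\int_a^b r^{d-1}(|\varphi'|^2+c\varphi^2)dr$ over $\varphi\in H^1_0((a,b))$ with $\int_a^b r^{d-1}\varphi^2dr=1$. (H1): $m(r)=m(1-r)$ on $[0,1]$ and $m\equiv0$ on $[a,b]$, where $a+b=1$. (H2): $c>0$ on $[0,1]$ and $c(r)>\lambda^{\mathcal{D}}$ for $r\in[0,a]\cup[b,1]$. Step function $\tilde m$: given $\delta\in(0,a)$, constants $0<h<\alpha<\beta<1<\nu$ and $l\in\mathbb{N}$ with $\sum_{i\ge1}(\alpha^{i+l}+\beta^{i+l})=a-\delta$, put $x_0=\delta$, $x_n=\delta+\sum_{i=1}^n(\alpha^{i+l}+\beta^{i+l})$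 ($n\ge1$), $y_n=x_n+\alpha^{n+l+1}$ ($n\ge0$); define $\tilde m(r)=-h^n$ on $[x_n,y_n)$ and $\tilde m(r)=\nu h^n$ on $[y_n,x_{n+1})$ for $n\ge0$, and $\tilde m(r)=\tilde m(1-r)$ for $r\in[b,1-\delta]$. $S_{\mathcal{D}}$: the set of $m\in C^1([0,1])$ such that, for some such $\delta,h,\alpha,\beta,\nu,l$, $m'$ changes sign only finitely many times in $[0,\delta)\cup(1-\delta,1]$ and $m(r)\ge\tilde m(r)$ for all $r\in[\delta,a]\cup[b,1-\delta]$. *)

theory Defs
  imports "HOL-Analysis.Analysis"
begin

text \<open>One-dimensional Sobolev space H^1((p,q)), in its standard absolutely continuous
  representation: phi has a weak derivative g in L^2((p,q)), i.e.
  phi x = phi p + integral of g over [p,x].\<close>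
definition H1_on :: "real \<Rightarrow> real \<Rightarrow> (real \<Rightarrow> real) \<Rightarrow> (real \<Rightarrow> real) \<Rightarrow> bool" where
  "H1_on p q \<phi> g \<longleftrightarrow>
     set_borel_measurable lborel {p..q} g \<and>
     set_integrable lborel {p..q} (\<lambda>t. (g t)^2) \<and>
     (\<forall>x\<in>{p..q}. \<phi> x = \<phi> p + (LBINT t:{p..x}. g t))"

definition eig_s :: "nat \<Rightarrow> (real \<Rightarrow> real) \<Rightarrow> (real \<Rightarrow> real) \<Rightarrow> real \<Rightarrow> real" where
  "eig_s d m c s = Inf {(LBINT r:{0..1}. r^(d-1) * exp (2 * s * m r) * ((g r)^2 + c r * (\<phi> r)^2)) | \<phi> g.
       H1_on 0 1 \<phi> g \<and> (LBINT r:{0..1}. r^(d-1) * exp (2 * s * m r) * (\<phi> r)^2) = 1}"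

definition eig_D :: "nat \<Rightarrow> (real \<Rightarrow> real) \<Rightarrow> real \<Rightarrow> real \<Rightarrow> real" where
  "eig_D d c a b = Inf {(LBINT r:{a..b}. r^(d-1) * ((g r)^2 + c r * (\<phi> r)^2)) | \<phi> g.
       H1_on a b \<phi> g \<and> \<phi> a = 0 \<and> \<phi> b = 0 \<and> (LBINT r:{a..b}. r^(d-1) * (\<phi> r)^2) = 1}"

definition xs_pt :: "real \<Rightarrow> real \<Rightarrow> real \<Rightarrow> nat \<Rightarrow> nat \<Rightarrow> real" where
  "xs_pt \<delta> \<alpha> \<beta> l n = \<delta> + (\<Sum>i\<in>{1..n}. \<alpha>^(i+l) + \<beta>^(i+l))"

definition ys_pt :: "real \<Rightarrow> real \<Rightarrow> real \<Rightarrow> nat \<Rightarrow> nat \<Rightarrow> real" where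
  "ys_pt \<delta> \<alpha> \<beta> l n = xs_pt \<delta> \<alpha> \<beta> l n + \<alpha>^(n+l+1)"

text \<open>m \<ge> m-tilde on [delta,a) and on (b,1-delta] (where m-tilde(r) = m-tilde(1-r)).\<close>
definition above_step :: "(real \<Rightarrow> real) \<Rightarrow> real \<Rightarrow> real \<Rightarrow> real \<Rightarrow> real \<Rightarrow> real \<Rightarrow> nat \<Rightarrow> bool" where
  "above_step m \<delta> h \<alpha> \<beta> \<nu> l \<longleftrightarrow>
     (\<forall>n. \<forall>r\<in>{xs_pt \<delta> \<alpha> \<beta> l n..<ys_pt \<delta> \<alpha> \<beta> l n}.
          m r \<ge> - (h^n) \<and> m (1 - r) \<ge> - (h^n)) \<and>
     (\<forall>n. \<forall>r\<in>{ys_pt \<delta> \<alpha> \<beta> l n..<xs_pt \<delta> \<alpha> \<beta> l (Suc n)}.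
          m r \<ge> \<nu> * h^n \<and> m (1 - r) \<ge> \<nu> * h^n)"

text \<open>f changes sign only finitely many times on S: the number of strict sign
  alternations along increasing finite sequences of points of S is bounded.\<close>
definition finite_sign_changes :: "(real \<Rightarrow> real) \<Rightarrow> real set \<Rightarrow> bool" where
  "finite_sign_changes f S \<longleftrightarrow>
     (\<exists>N::nat. \<forall>ps::real list. sorted_wrt (<) ps \<and> set ps \<subseteq> S \<and>
        (\<forall>i. Suc i < length ps \<longrightarrow> f (ps!i) * f (ps!(Suc i)) < 0) \<longrightarrow> length ps \<le> N)"

definition in_SD :: "real \<Rightarrow> (real \<Rightarrow> real) \<Rightarrow> (real \<Rightarrow> real) \<Rightarrow> bool" where
  "in_SD a m m' \<longleftrightarrow>
     (\<exists>\<delta> h \<alpha> \<beta> \<nu> (l::nat). 0 < \<delta> \<and> \<delta> < a \<and> 0 < h \<and> h < \<alpha> \<and> \<alpha> < \<beta> \<and> \<beta> < 1 \<and> 1 < \<nu> \<and>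
        (\<lambda>i. \<alpha>^(Suc i + l) + \<beta>^(Suc i + l)) sums (a - \<delta>) \<and>
        finite_sign_changes m' ({0..<\<delta>} \<union> {1-\<delta><..1}) \<and>
        above_step m \<delta> h \<alpha> \<beta> \<nu> l)"

end

(*
  Let \<phi> be normalised in the weighted space L^2(r^(d-1) e^(2 s m) dr) with Rayleigh quotient
  below \<lambda>^D; then its weighted energy is bounded independently of s. Next to a the profile m
  has a plateau of height \<nu> h^n and length \<beta>^(n+l+1), and between the plateau and a it stays
  above -h^(n+1). On the plateau the weight is huge, so \<phi> is small there in mean square; the
  energy bound controls the oscillation of \<phi> up to a. Choosing n with s h^n of the order of
  log s makes both contributions tend to 0, so \<phi>(a) and likewise \<phi>(b) become small
  as s \<rightarrow> \<infinity>. On [a,b] the weight is r^(d-1), and subtracting from \<phi> its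
  chord between a and b gives a Dirichlet test function, so the quotient over [a,b] is at least
  \<lambda>^D up to an error O(max(|\<phi>(a)|, |\<phi>(b)|)); outside [a,b] the potential c exceeds \<lambda>^D.
*)

theory Submission
  imports Defs "HOL-Real_Asymp.Real_Asymp"
begin

section \<open>Set integrals on compact intervals\<close>

lemma set_integral_nonneg:
  fixes f :: "'a \<Rightarrow> real"
  assumes "\<And>x. x \<in> A \<Longrightarrow> 0 \<le> f x"
  shows "0 \<le> (LINT x:A|M. f x)"
  unfolding set_lebesgue_integral_def
  by (rule integral_nonneg_AE, rule AE_I2) (use assms in \<open>auto simp: indicator_def\<close>)

lemma set_integral_mono_set:
  fixes f :: "'a \<Rightarrow> real"
  assumes "set_integrable M A f" "B \<in> sets M" "B \<subseteq> A" "\<And>x. x \<in> A - B \<Longrightarrow> 0 \<le> f x"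
  shows "(LINT x:B|M. f x) \<le> (LINT x:A|M. f x)"
  using assms set_integrable_subset[OF assms(1-3)]
  unfolding set_integrable_def set_lebesgue_integral_def
  by (intro integral_mono) (auto simp: indicator_def)

lemma set_integrable_continuous_mult:
  fixes h f :: "real \<Rightarrow> real"
  assumes "compact S" "continuous_on S h" "set_integrable lborel S f"
  shows "set_integrable lborel S (\<lambda>x. h x * f x)"
proof -
  obtain B where B: "\<And>x. x \<in> S \<Longrightarrow> norm (h x) \<le> B"
    using continuous_on_compact_bound[OF assms(1,2)] by blast
  have "set_borel_measurable lborel S h"
    using borel_measurable_continuous_on_indicator[OF _ assms(2)] assms(1)
    unfolding set_borel_measurable_def by (simp add: compact_imp_closed)
  moreover have "set_borel_measurable lborel S f"
    using assms(3) unfolding set_integrable_def set_borel_measurable_def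
    by (rule borel_measurable_integrable)
  moreover have "(\<lambda>x. indicator S x *\<^sub>R (h x * f x)) =
      (\<lambda>x. (indicator S x *\<^sub>R h x) * (indicator S x *\<^sub>R f x))"
    by (auto simp: indicator_def fun_eq_iff)
  ultimately have meas: "set_borel_measurable lborel S (\<lambda>x. h x * f x)"
    unfolding set_borel_measurable_def by simp
  have bound: "AE x in lborel. x \<in> S \<longrightarrow> norm (h x * f x) \<le> norm (B * f x)"
  proof (intro AE_I2 impI)
    fix x assume "x \<in> S"
    then have "\<bar>h x\<bar> \<le> \<bar>B\<bar>"
      using B by fastforce
    then show "norm (h x * f x) \<le> norm (B * f x)"
      unfolding real_norm_def abs_mult by (rule mult_right_mono) simp
  qed
  show ?thesis
    by (rule set_integrable_bound[OF _ meas bound]) (use assms(3) in simp)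
qed

lemma set_integral_abs_squared_le:
  fixes g :: "real \<Rightarrow> real"
  assumes g: "set_integrable lborel {u..v} g" and g2: "set_integrable lborel {u..v} (\<lambda>x. (g x)^2)"
    and "u < v"
  shows "(LBINT x:{u..v}. \<bar>g x\<bar>)^2 \<le> (v - u) * (LBINT x:{u..v}. (g x)^2)"
proof -
  define I where "I = (LBINT x:{u..v}. \<bar>g x\<bar>)"
  define J where "J = (LBINT x:{u..v}. (g x)^2)"
  have const: "set_integrable lborel {u..v} (\<lambda>x. c)" for c :: real
    by (rule borel_integrable_atLeastAtMost') simp
  have ga: "set_integrable lborel {u..v} (\<lambda>x. \<bar>g x\<bar>)"
    using set_integrable_abs[OF g] .
  \<comment> \<open>Cauchy-Schwarz in the form: the variance of \<open>\<bar>g\<bar>\<close> on \<open>[u, v]\<close> is nonnegative\<close>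
  have "0 \<le> (LBINT x:{u..v}. ((v - u) * \<bar>g x\<bar> - I)^2)"
    by (rule set_integral_nonneg) simp
  also have "\<dots> = (LBINT x:{u..v}. (v - u)^2 * (g x)^2 - (2 * (v - u) * I) * \<bar>g x\<bar> + I^2)"
    by (rule set_lebesgue_integral_cong) (auto simp: power2_eq_square algebra_simps)
  also have "\<dots> = (v - u)^2 * J - (2 * (v - u) * I) * I + I^2 * (v - u)"
    using g2 ga const assms(3) unfolding I_def J_def by (simp add: set_integral_const)
  also have "\<dots> = (v - u) * ((v - u) * J - I^2)"
    by (simp add: power2_eq_square algebra_simps)
  finally show ?thesis
    using assms(3) unfolding I_def[symmetric] J_def[symmetric]
    by (simp add: zero_le_mult_iff)
qed

section \<open>One-dimensional Sobolev functions\<close>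

lemma H1_on_integrable:
  assumes "H1_on p q \<phi> g"
  shows "set_integrable lborel {p..q} g"
proof (rule set_integrable_bound[where f = "\<lambda>x. 1 + (g x)^2"])
  have "set_integrable lborel {p..q} (\<lambda>x. 1::real)"
    by (rule borel_integrable_atLeastAtMost') simp
  then show "set_integrable lborel {p..q} (\<lambda>x. 1 + (g x)^2)"
    using assms unfolding H1_on_def by (intro set_integral_add) auto
  show "set_borel_measurable lborel {p..q} g"
    using assms unfolding H1_on_def by auto
  have "\<bar>y\<bar> \<le> 1 + y^2" for y :: real
  proof (cases "\<bar>y\<bar> \<le> 1")
    case False
    then have "\<bar>y\<bar> * 1 \<le> \<bar>y\<bar> * \<bar>y\<bar>"
      by (intro mult_left_mono) auto
    then show ?thesis
      by (simp add: power2_eq_square abs_mult_self_eq)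
  qed (use zero_le_power2[of y] in linarith)
  then show "AE x in lborel. x \<in> {p..q} \<longrightarrow> norm (g x) \<le> norm (1 + (g x)^2)"
    by (intro AE_I2) simp
qed

lemma H1_on_eq:
  "H1_on p q \<phi> g \<Longrightarrow> x \<in> {p..q} \<Longrightarrow> \<phi> x = \<phi> p + (LBINT t:{p..x}. g t)"
  unfolding H1_on_def by blast

lemma H1_on_diff:
  assumes "H1_on p0 q0 \<phi> g" "p0 \<le> p" "p \<le> q" "q \<le> q0"
  shows "\<phi> q - \<phi> p = (LBINT t:{p..q}. g t)"
proof -
  have lebesgue_eq_HK: "(LBINT t:{u..v}. g t) = integral {u..v} g" if "p0 \<le> u" "v \<le> q0" for u v
    using set_integrable_subset[OF H1_on_integrable[OF assms(1)]] that
    by (intro set_borel_integral_eq_integral(2)) auto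
  have "g integrable_on {p0..q}"
    using set_integrable_subset[OF H1_on_integrable[OF assms(1)]] assms
    by (intro set_borel_integral_eq_integral(1)) auto
  then have "integral {p0..p} g + integral {p..q} g = integral {p0..q} g"
    using assms by (intro Henstock_Kurzweil_Integration.integral_combine) auto
  moreover have "\<phi> q = \<phi> p0 + integral {p0..q} g" "\<phi> p = \<phi> p0 + integral {p0..p} g"
    using H1_on_eq[OF assms(1), of q] H1_on_eq[OF assms(1), of p] assms
      lebesgue_eq_HK[of p0 q] lebesgue_eq_HK[of p0 p] by simp_all
  ultimately show ?thesis
    using assms lebesgue_eq_HK[of p q] by simp
qed

lemma H1_on_subinterval:
  assumes "H1_on p q \<phi> g" "p \<le> u" "u \<le> v" "v \<le> q"
  shows "H1_on u v \<phi> g"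
  unfolding H1_on_def
proof (intro conjI ballI)
  show "set_borel_measurable lborel {u..v} g"
    using set_borel_measurable_subset[of lborel "{p..q}" g "{u..v}"] assms
    unfolding H1_on_def by auto
  show "set_integrable lborel {u..v} (\<lambda>t. (g t)^2)"
    using set_integrable_subset[of lborel "{p..q}" "\<lambda>t. (g t)^2" "{u..v}"] assms
    unfolding H1_on_def by auto
  show "\<phi> x = \<phi> u + (LBINT t:{u..x}. g t)" if "x \<in> {u..v}" for x
    using H1_on_diff[OF assms(1), of u x] assms that by auto
qed

lemma H1_on_continuous:
  assumes "H1_on p q \<phi> g"
  shows "continuous_on {p..q} \<phi>"
proof -
  have g: "g integrable_on {p..q}"
    using set_borel_integral_eq_integral(1)[OF H1_on_integrable[OF assms]] .
  have "continuous_on {p..q} (\<lambda>x. \<phi> p + integral {p..x} g)"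
    by (intro continuous_intros indefinite_integral_continuous_1 g)
  moreover have "\<phi> p + integral {p..x} g = \<phi> x" if "x \<in> {p..q}" for x
    using H1_on_diff[OF assms, of p x] that set_integrable_subset[OF H1_on_integrable[OF assms]]
    by (auto simp: set_borel_integral_eq_integral(2))
  ultimately show ?thesis
    by (rule continuous_on_eq)
qed

lemma H1_on_weighted_integrable:
  assumes H: "H1_on p q \<phi> g" and w: "continuous_on {p..q} w"
  shows "set_integrable lborel {p..q} (\<lambda>r. w r * (g r)^2)"
    and "set_integrable lborel {p..q} (\<lambda>r. w r * (\<phi> r)^2)"
    and "continuous_on {p..q} P \<Longrightarrow> set_integrable lborel {p..q} (\<lambda>r. w r * (P r * (\<phi> r)^2))"
proof -
  show "set_integrable lborel {p..q} (\<lambda>r. w r * (g r)^2)"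
    using H w by (auto simp: H1_on_def intro!: set_integrable_continuous_mult)
  show "set_integrable lborel {p..q} (\<lambda>r. w r * (\<phi> r)^2)"
    and "continuous_on {p..q} P \<Longrightarrow> set_integrable lborel {p..q} (\<lambda>r. w r * (P r * (\<phi> r)^2))"
    using w H1_on_continuous[OF H] by (auto intro!: borel_integrable_atLeastAtMost' continuous_intros)
qed

lemma H1_on_affine:
  assumes "H1_on p q \<phi> g"
  shows "H1_on p q (\<lambda>x. t * \<phi> x + k * x + e) (\<lambda>x. t * g x + k)"
  unfolding H1_on_def
proof (intro conjI ballI)
  have g: "set_integrable lborel {p..q} g" and g2: "set_integrable lborel {p..q} (\<lambda>x. (g x)^2)"
    using H1_on_integrable[OF assms] assms by (auto simp: H1_on_def)
  have const: "set_integrable lborel {p..q} (\<lambda>x. c)" for c :: real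
    by (rule borel_integrable_atLeastAtMost') simp
  show "set_borel_measurable lborel {p..q} (\<lambda>x. t * g x + k)"
    using set_integral_add(1)[OF set_integrable_mult_right[OF g] const]
    unfolding set_integrable_def set_borel_measurable_def by (rule borel_measurable_integrable)
  have "set_integrable lborel {p..q} (\<lambda>x. t^2 * (g x)^2 + (2 * t * k) * g x + k^2)"
    using g g2 const by (intro set_integral_add set_integrable_mult_right)
  then show "set_integrable lborel {p..q} (\<lambda>x. (t * g x + k)^2)"
    by (simp add: power2_eq_square algebra_simps)
  fix x assume x: "x \<in> {p..q}"
  have "(LBINT s:{p..x}. t * g s + k) = t * (LBINT s:{p..x}. g s) + k * (x - p)"
    using set_integrable_subset[OF g, of "{p..x}"] borel_integrable_atLeastAtMost'[of p x "\<lambda>_. k"] x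
    by (simp add: set_integral_const)
  then show "t * \<phi> x + k * x + e = t * \<phi> p + k * p + e + (LBINT s:{p..x}. t * g s + k)"
    using H1_on_eq[OF assms x] by (simp add: algebra_simps)
qed

lemma H1_on_sq_diff_le:
  assumes "H1_on u v \<phi> g" "x \<in> {u..v}" "y \<in> {u..v}"
  shows "(\<phi> x - \<phi> y)^2 \<le> (v - u) * (LBINT t:{u..v}. (g t)^2)"
proof -
  have g: "set_integrable lborel {u..v} g" and g2: "set_integrable lborel {u..v} (\<lambda>t. (g t)^2)"
    using H1_on_integrable[OF assms(1)] assms(1) by (auto simp: H1_on_def)
  define D where "D = (LBINT t:{u..v}. \<bar>g t\<bar>)"
  have osc: "\<bar>\<phi> q - \<phi> p\<bar> \<le> D" if "p \<in> {u..v}" "q \<in> {u..v}" "p \<le> q" for p q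
  proof -
    have "\<bar>\<phi> q - \<phi> p\<bar> = \<bar>LBINT t:{p..q}. g t\<bar>"
      using H1_on_diff[OF assms(1)] that by simp
    also have "\<dots> \<le> (LBINT t:{p..q}. \<bar>g t\<bar>)"
      using set_integral_norm_bound[OF set_integrable_subset[OF g]] that by simp
    also have "\<dots> \<le> D"
      unfolding D_def using that by (intro set_integral_mono_set set_integrable_abs[OF g]) auto
    finally show ?thesis .
  qed
  have "\<bar>\<phi> x - \<phi> y\<bar> \<le> D"
    using osc[OF assms(2,3)] osc[OF assms(3,2)] by (cases "x \<le> y") (auto simp: abs_minus_commute)
  then have "(\<phi> x - \<phi> y)^2 \<le> D^2"
    by (metis abs_ge_zero order_trans power2_abs power_mono)
  show ?thesis
  proof (cases "u < v")
    case True
    then have "D^2 \<le> (v - u) * (LBINT t:{u..v}. (g t)^2)"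
      unfolding D_def using set_integral_abs_squared_le[OF g g2] by blast
    with \<open>(\<phi> x - \<phi> y)^2 \<le> D^2\<close> show ?thesis by linarith
  next
    case False
    with assms(2,3) have "x = y" "u = v" by auto
    then show ?thesis by simp
  qed
qed

section \<open>The Dirichlet eigenvalue and chord corrections\<close>

lemma eig_D_mult_mass_le_energy:
  fixes \<psi> \<gamma> c :: "real \<Rightarrow> real" and d :: nat
  assumes H: "H1_on a b \<psi> \<gamma>" "\<psi> a = 0" "\<psi> b = 0"
    and "0 \<le> a" and c_pos: "\<And>r. r \<in> {a..b} \<Longrightarrow> 0 < c r"
  shows "eig_D d c a b * (LBINT r:{a..b}. r^(d-1) * (\<psi> r)^2)
    \<le> (LBINT r:{a..b}. r^(d-1) * ((\<gamma> r)^2 + c r * (\<psi> r)^2))"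
proof -
  let ?S = "{(LBINT r:{a..b}. r^(d-1) * ((g r)^2 + c r * (\<phi> r)^2)) | \<phi> g.
    H1_on a b \<phi> g \<and> \<phi> a = 0 \<and> \<phi> b = 0 \<and> (LBINT r:{a..b}. r^(d-1) * (\<phi> r)^2) = 1}"
  define N where "N = (LBINT r:{a..b}. r^(d-1) * (\<psi> r)^2)"
  define R where "R = (LBINT r:{a..b}. r^(d-1) * ((\<gamma> r)^2 + c r * (\<psi> r)^2))"
  have energy_nonneg: "0 \<le> (LBINT r:{a..b}. r^(d-1) * ((g r)^2 + c r * (\<phi> r)^2))" for \<phi> g
    using \<open>0 \<le> a\<close> c_pos
    by (intro set_integral_nonneg mult_nonneg_nonneg add_nonneg_nonneg) (auto intro: less_imp_le)
  have "0 \<le> N"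
    unfolding N_def using \<open>0 \<le> a\<close> by (intro set_integral_nonneg) auto
  show ?thesis
  proof (cases "N = 0")
    case True
    then show ?thesis
      using energy_nonneg unfolding N_def by simp
  next
    case False
    define t where "t = 1 / sqrt N"
    have t2: "t^2 * N = 1"
      unfolding t_def using False \<open>0 \<le> N\<close> by (simp add: power_divide)
    have scale: "(LBINT r:{a..b}. r^(d-1) * f r (t * \<gamma> r) (t * \<psi> r))
        = t^2 * (LBINT r:{a..b}. r^(d-1) * f r (\<gamma> r) (\<psi> r))"
      if "\<And>r x y. f r (t * x) (t * y) = t^2 * f r x y" for f
      using that by (simp add: mult.left_commute)
    have "t^2 * R \<in> ?S"
    proof (intro CollectI exI conjI)
      show "H1_on a b (\<lambda>x. t * \<psi> x) (\<lambda>x. t * \<gamma> x)"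
        using H1_on_affine[OF H(1), of t 0 0] by simp
      show "t * \<psi> a = 0" "t * \<psi> b = 0"
        using H by simp_all
      show "t^2 * R = (LBINT r:{a..b}. r^(d-1) * ((t * \<gamma> r)^2 + c r * (t * \<psi> r)^2))"
        unfolding R_def
        by (rule scale[of "\<lambda>r x y. x^2 + c r * y^2", symmetric]) (simp add: power_mult_distrib algebra_simps)
      show "(LBINT r:{a..b}. r^(d-1) * (t * \<psi> r)^2) = 1"
        using scale[of "\<lambda>_ _ y. y^2"] t2 unfolding N_def by (simp add: power_mult_distrib)
    qed
    moreover have "bdd_below ?S"
      using energy_nonneg by (intro bdd_belowI[of _ 0]) blast
    ultimately have "eig_D d c a b \<le> t^2 * R"
      unfolding eig_D_def by (rule cInf_lower)
    then have "eig_D d c a b * N \<le> t^2 * R * N"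
      using \<open>0 \<le> N\<close> by (rule mult_right_mono)
    also have "t^2 * R * N = R"
      using t2 by (simp add: algebra_simps)
    finally show ?thesis
      unfolding N_def R_def .
  qed
qed

lemma dirichlet_form_nonneg:
  fixes \<psi> \<gamma> c :: "real \<Rightarrow> real" and d :: nat
  assumes H: "H1_on a b \<psi> \<gamma>" "\<psi> a = 0" "\<psi> b = 0"
    and "0 \<le> a" and c_cont: "continuous_on {a..b} c" and c_pos: "\<And>r. r \<in> {a..b} \<Longrightarrow> 0 < c r"
  shows "set_integrable lborel {a..b} (\<lambda>r. r^(d-1) * ((\<gamma> r)^2 + (c r - eig_D d c a b) * (\<psi> r)^2))"
    and "0 \<le> (LBINT r:{a..b}. r^(d-1) * ((\<gamma> r)^2 + (c r - eig_D d c a b) * (\<psi> r)^2))"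
proof -
  define \<Lambda> where "\<Lambda> = eig_D d c a b"
  have "continuous_on {a..b} (\<lambda>r. r^(d-1))"
    by (intro continuous_intros)
  note weighted = H1_on_weighted_integrable[OF H(1) this]
  have i\<gamma>: "set_integrable lborel {a..b} (\<lambda>r. r^(d-1) * (\<gamma> r)^2)"
    and i\<psi>: "set_integrable lborel {a..b} (\<lambda>r. r^(d-1) * (\<psi> r)^2)"
    and ic\<psi>: "set_integrable lborel {a..b} (\<lambda>r. r^(d-1) * (c r * (\<psi> r)^2))"
    using weighted c_cont by auto
  have split: "(\<lambda>r. r^(d-1) * ((\<gamma> r)^2 + (c r - \<Lambda>) * (\<psi> r)^2))
      = (\<lambda>r. r^(d-1) * (\<gamma> r)^2 + r^(d-1) * (c r * (\<psi> r)^2) - \<Lambda> * (r^(d-1) * (\<psi> r)^2))"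
    by (simp add: fun_eq_iff algebra_simps)
  show "set_integrable lborel {a..b} (\<lambda>r. r^(d-1) * ((\<gamma> r)^2 + (c r - eig_D d c a b) * (\<psi> r)^2))"
    unfolding \<Lambda>_def[symmetric] split using i\<gamma> i\<psi> ic\<psi> by auto
  have "\<Lambda> * (LBINT r:{a..b}. r^(d-1) * (\<psi> r)^2) \<le> (LBINT r:{a..b}. r^(d-1) * ((\<gamma> r)^2 + c r * (\<psi> r)^2))"
    unfolding \<Lambda>_def using H \<open>0 \<le> a\<close> c_pos by (rule eig_D_mult_mass_le_energy)
  also have "\<dots> = (LBINT r:{a..b}. r^(d-1) * (\<gamma> r)^2) + (LBINT r:{a..b}. r^(d-1) * (c r * (\<psi> r)^2))"
    using i\<gamma> ic\<psi> by (simp add: distrib_left)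
  finally show "0 \<le> (LBINT r:{a..b}. r^(d-1) * ((\<gamma> r)^2 + (c r - eig_D d c a b) * (\<psi> r)^2))"
    unfolding \<Lambda>_def[symmetric] split using i\<gamma> i\<psi> ic\<psi> by simp
qed

lemma sq_perturbation_le:
  fixes g k \<phi> l C e Bc D :: real
  assumes l: "\<bar>l\<bar> \<le> e" and k: "\<bar>k\<bar> \<le> 2 * e / D" and C: "\<bar>C\<bar> \<le> Bc"
    and "e \<le> 1" "0 < D"
  shows "(g - k)^2 + C * (\<phi> - l)^2 \<le> g^2 + C * \<phi>^2 + e * (2 * (1 + g^2) / D + 4 / D^2 + Bc * (2 + \<phi>^2))"
proof -
  have "0 \<le> e" using l by linarith
  have two_abs: "2 * \<bar>y\<bar> \<le> 1 + y^2" for y :: real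
    using zero_le_power2[of "\<bar>y\<bar> - 1"] by (simp add: power2_eq_square algebra_simps abs_mult_self_eq)
  have "- 2 * k * g \<le> \<bar>k\<bar> * (2 * \<bar>g\<bar>)"
    by (simp add: abs_mult[symmetric] abs_le_iff)
  also have "\<dots> \<le> 2 * e / D * (1 + g^2)"
    using k two_abs[of g] by (intro mult_mono) auto
  also have "\<dots> = e * (2 * (1 + g^2) / D)"
    by simp
  finally have cross: "- 2 * k * g \<le> e * (2 * (1 + g^2) / D)" .
  have "k^2 \<le> (2 * e / D)^2"
    using k by (metis abs_ge_zero order_trans power2_abs power_mono)
  also have "\<dots> \<le> e * (4 / D^2)"
    using \<open>0 \<le> e\<close> \<open>e \<le> 1\<close> \<open>0 < D\<close> by (simp add: power_divide power2_eq_square field_simps mult_left_le_one_le)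
  finally have square: "k^2 \<le> e * (4 / D^2)" .
  have "\<bar>l^2 - 2 * \<phi> * l\<bar> \<le> \<bar>l\<bar> * \<bar>l\<bar> + \<bar>l\<bar> * (2 * \<bar>\<phi>\<bar>)"
    by (simp add: power2_eq_square abs_mult abs_triangle_ineq4 order_trans[OF abs_triangle_ineq4])
  also have "\<dots> \<le> e * 1 + e * (1 + \<phi>^2)"
    using l \<open>e \<le> 1\<close> two_abs[of \<phi>] by (intro add_mono mult_mono) auto
  finally have "\<bar>l^2 - 2 * \<phi> * l\<bar> \<le> e * (2 + \<phi>^2)"
    by (simp add: algebra_simps)
  then have "\<bar>C\<bar> * \<bar>l^2 - 2 * \<phi> * l\<bar> \<le> Bc * (e * (2 + \<phi>^2))"
    using C by (intro mult_mono) auto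
  then have "C * (l^2 - 2 * \<phi> * l) \<le> Bc * (e * (2 + \<phi>^2))"
    by (metis abs_ge_self abs_mult order_trans)
  then show ?thesis
    using cross square by (simp add: power2_eq_square algebra_simps)
qed

lemma abs_chord_le:
  fixes p q e a b r :: real
  assumes "a < b" "r \<in> {a..b}" "\<bar>p\<bar> \<le> e" "\<bar>q\<bar> \<le> e"
  shows "\<bar>p + (q - p) / (b - a) * (r - a)\<bar> \<le> e"
proof -
  define \<theta> where "\<theta> = (r - a) / (b - a)"
  have "0 \<le> \<theta>" "\<theta> \<le> 1"
    using assms(1,2) unfolding \<theta>_def by auto
  have "(q - p) / (b - a) * (r - a) = \<theta> * (q - p)"
    unfolding \<theta>_def by simp
  then have "p + (q - p) / (b - a) * (r - a) = (1 - \<theta>) * p + \<theta> * q"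
    by (simp add: algebra_simps)
  also have "\<bar>\<dots>\<bar> \<le> (1 - \<theta>) * \<bar>p\<bar> + \<theta> * \<bar>q\<bar>"
    using \<open>0 \<le> \<theta>\<close> \<open>\<theta> \<le> 1\<close> abs_triangle_ineq[of "(1 - \<theta>) * p" "\<theta> * q"] by (simp add: abs_mult)
  also have "\<dots> \<le> (1 - \<theta>) * e + \<theta> * e"
    using \<open>0 \<le> \<theta>\<close> \<open>\<theta> \<le> 1\<close> assms(3,4) by (intro add_mono mult_left_mono) auto
  finally show ?thesis
    by (simp add: algebra_simps)
qed

lemma weighted_defect_integral_le:
  fixes \<phi> g :: "real \<Rightarrow> real" and d :: nat
  assumes ab: "0 \<le> a" "a < b" "b \<le> 1" and "0 \<le> Bc"
    and ig: "set_integrable lborel {a..b} (\<lambda>r. r^(d-1) * (g r)^2)"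
    and i\<phi>: "set_integrable lborel {a..b} (\<lambda>r. r^(d-1) * (\<phi> r)^2)"
    and g_energy: "(LBINT r:{a..b}. r^(d-1) * (g r)^2) \<le> L"
    and \<phi>_mass: "(LBINT r:{a..b}. r^(d-1) * (\<phi> r)^2) \<le> 1"
  shows "(LBINT r:{a..b}. 2 / (b - a) * (r^(d-1) * (g r)^2) + (2 / (b - a) + 4 / (b - a)^2 + 2 * Bc) * r^(d-1)
      + Bc * (r^(d-1) * (\<phi> r)^2)) \<le> 2 * (1 + L) / (b - a) + 4 / (b - a)^2 + 3 * Bc"
proof -
  define D where "D = b - a"
  have "0 < D" "D \<le> 1"
    unfolding D_def using ab by auto
  have iW: "set_integrable lborel {a..b} (\<lambda>r. r^(d-1))"
    by (intro borel_integrable_atLeastAtMost' continuous_intros)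
  have "(LBINT r:{a..b}. r^(d-1)) \<le> (LBINT r:{a..b}. 1)"
    using ab by (intro set_integral_mono[OF iW borel_integrable_atLeastAtMost'[OF continuous_on_const]])
      (auto intro: power_le_one)
  then have IW: "(LBINT r:{a..b}. r^(d-1)) \<le> 1"
    using ab \<open>D \<le> 1\<close> unfolding D_def by (simp add: set_integral_const)
  have "(LBINT r:{a..b}. 2 / D * (r^(d-1) * (g r)^2) + (2 / D + 4 / D^2 + 2 * Bc) * r^(d-1)
      + Bc * (r^(d-1) * (\<phi> r)^2)) = 2 / D * (LBINT r:{a..b}. r^(d-1) * (g r)^2)
      + (2 / D + 4 / D^2 + 2 * Bc) * (LBINT r:{a..b}. r^(d-1)) + Bc * (LBINT r:{a..b}. r^(d-1) * (\<phi> r)^2)"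
    using ig iW i\<phi> by simp
  also have "\<dots> \<le> 2 / D * L + (2 / D + 4 / D^2 + 2 * Bc) * 1 + Bc * 1"
    using IW g_energy \<phi>_mass \<open>0 < D\<close> \<open>0 \<le> Bc\<close> by (intro add_mono mult_left_mono) auto
  also have "\<dots> = 2 * (1 + L) / D + 4 / D^2 + 3 * Bc"
    by (simp add: add_divide_distrib algebra_simps)
  finally show ?thesis
    unfolding D_def .
qed

lemma dirichlet_energy_defect_bound:
  fixes \<phi> g c :: "real \<Rightarrow> real" and d :: nat
  assumes H: "H1_on a b \<phi> g" and ab: "0 \<le> a" "a < b" "b \<le> 1"
    and c_cont: "continuous_on {a..b} c" and c_pos: "\<And>r. r \<in> {a..b} \<Longrightarrow> 0 < c r"
    and Bc: "\<And>r. r \<in> {a..b} \<Longrightarrow> \<bar>c r - eig_D d c a b\<bar> \<le> Bc"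
    and g_energy: "(LBINT r:{a..b}. r^(d-1) * (g r)^2) \<le> L"
    and \<phi>_mass: "(LBINT r:{a..b}. r^(d-1) * (\<phi> r)^2) \<le> 1"
    and e: "\<bar>\<phi> a\<bar> \<le> e" "\<bar>\<phi> b\<bar> \<le> e" "e \<le> 1"
  shows "- e * (2 * (1 + L) / (b - a) + 4 / (b - a)^2 + 3 * Bc)
    \<le> (LBINT r:{a..b}. r^(d-1) * (g r)^2) + (LBINT r:{a..b}. r^(d-1) * ((c r - eig_D d c a b) * (\<phi> r)^2))"
proof -
  define \<Lambda> where "\<Lambda> = eig_D d c a b"
  define D where "D = b - a"
  define k where "k = (\<phi> b - \<phi> a) / D"
  define chord where "chord r = \<phi> a + k * (r - a)" for r
  define E where "E r = 2 / D * (r^(d-1) * (g r)^2) + (2 / D + 4 / D^2 + 2 * Bc) * r^(d-1)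
    + Bc * (r^(d-1) * (\<phi> r)^2)" for r :: real
  have "0 < D"
    unfolding D_def using ab by auto
  have "0 \<le> e" "0 \<le> Bc"
    using e Bc[of a] ab by auto
  \<comment> \<open>subtracting the chord of \<open>\<phi>\<close> gives an admissible Dirichlet function\<close>
  have chord_H1: "H1_on a b (\<lambda>r. \<phi> r - chord r) (\<lambda>r. g r - k)"
    using H1_on_affine[OF H, of 1 "- k" "k * a - \<phi> a"] unfolding chord_def by (simp add: algebra_simps)
  have chord_ends: "\<phi> a - chord a = 0" "\<phi> b - chord b = 0"
    unfolding chord_def k_def D_def using ab by auto
  note form = dirichlet_form_nonneg[where d = d, OF chord_H1 chord_ends ab(1) c_cont c_pos]
  have Wc: "continuous_on {a..b} (\<lambda>r. r^(d-1))"
    by (intro continuous_intros)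
  note weighted = H1_on_weighted_integrable[OF H Wc]
  have iE: "set_integrable lborel {a..b} E"
    unfolding E_def using weighted(1,2) borel_integrable_atLeastAtMost'[OF Wc]
    by (intro set_integral_add set_integrable_mult_right)
  have ic: "set_integrable lborel {a..b} (\<lambda>r. r^(d-1) * ((c r - \<Lambda>) * (\<phi> r)^2))"
    by (rule weighted(3)) (intro continuous_intros c_cont)
  have iR: "set_integrable lborel {a..b} (\<lambda>r. r^(d-1) * (g r)^2 + r^(d-1) * ((c r - \<Lambda>) * (\<phi> r)^2) + e * E r)"
    using weighted(1) ic iE by auto
  have pointwise: "r^(d-1) * ((g r - k)^2 + (c r - \<Lambda>) * (\<phi> r - chord r)^2)
      \<le> r^(d-1) * (g r)^2 + r^(d-1) * ((c r - \<Lambda>) * (\<phi> r)^2) + e * E r" if r: "r \<in> {a..b}" for r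
  proof -
    have "\<bar>chord r\<bar> \<le> e"
      unfolding chord_def k_def D_def using abs_chord_le[OF ab(2) r e(1,2)] .
    moreover have "\<bar>k\<bar> \<le> 2 * e / D"
      unfolding k_def using e \<open>0 < D\<close> by (simp add: abs_divide divide_right_mono)
    ultimately have "(g r - k)^2 + (c r - \<Lambda>) * (\<phi> r - chord r)^2
        \<le> (g r)^2 + (c r - \<Lambda>) * (\<phi> r)^2 + e * (2 * (1 + (g r)^2) / D + 4 / D^2 + Bc * (2 + (\<phi> r)^2))"
      using Bc[OF r] e \<open>0 < D\<close> unfolding \<Lambda>_def by (intro sq_perturbation_le) auto
    then have "r^(d-1) * ((g r - k)^2 + (c r - \<Lambda>) * (\<phi> r - chord r)^2)
        \<le> r^(d-1) * ((g r)^2 + (c r - \<Lambda>) * (\<phi> r)^2 + e * (2 * (1 + (g r)^2) / D + 4 / D^2 + Bc * (2 + (\<phi> r)^2)))"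
      using r ab by (intro mult_left_mono) auto
    moreover have E_eq: "r^(d-1) * (2 * (1 + (g r)^2) / D + 4 / D^2 + Bc * (2 + (\<phi> r)^2)) = E r"
      unfolding E_def using \<open>0 < D\<close> by (simp add: field_simps)
    ultimately show ?thesis
      unfolding E_eq[symmetric] by (simp add: algebra_simps)
  qed
  have "0 \<le> (LBINT r:{a..b}. r^(d-1) * ((g r - k)^2 + (c r - \<Lambda>) * (\<phi> r - chord r)^2))"
    using form(2) unfolding \<Lambda>_def .
  also have "\<dots> \<le> (LBINT r:{a..b}. r^(d-1) * (g r)^2 + r^(d-1) * ((c r - \<Lambda>) * (\<phi> r)^2) + e * E r)"
    using form(1) iR pointwise unfolding \<Lambda>_def by (rule set_integral_mono)
  also have "\<dots> = (LBINT r:{a..b}. r^(d-1) * (g r)^2) + (LBINT r:{a..b}. r^(d-1) * ((c r - \<Lambda>) * (\<phi> r)^2))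
      + e * (LBINT r:{a..b}. E r)"
    using weighted(1) ic iE by simp
  also have "(LBINT r:{a..b}. E r) \<le> 2 * (1 + L) / D + 4 / D^2 + 3 * Bc"
    unfolding E_def D_def using weighted(1,2) g_energy \<phi>_mass ab \<open>0 \<le> Bc\<close>
    by (intro weighted_defect_integral_le)
  finally show ?thesis
    using \<open>0 \<le> e\<close> unfolding \<Lambda>_def D_def by (simp add: mult_left_mono)
qed

section \<open>Smallness of the boundary values\<close>

lemma xs_pt_eq_sum: "xs_pt \<delta> \<alpha> \<beta> l n = \<delta> + (\<Sum>i<n. \<alpha>^(Suc i + l) + \<beta>^(Suc i + l))"
  unfolding xs_pt_def by (simp add: sum.atLeast1_atMost_eq)

lemma xs_pt_Suc: "xs_pt \<delta> \<alpha> \<beta> l (Suc n) = ys_pt \<delta> \<alpha> \<beta> l n + \<beta>^(n+l+1)"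
  unfolding ys_pt_def xs_pt_eq_sum by simp

lemma xs_pt_le_ys_pt: "0 \<le> \<alpha> \<Longrightarrow> xs_pt \<delta> \<alpha> \<beta> l n \<le> ys_pt \<delta> \<alpha> \<beta> l n"
  unfolding ys_pt_def by simp

lemma xs_pt_bounds:
  fixes \<delta> \<alpha> \<beta> a :: real
  assumes "0 < \<alpha>" "\<alpha> < \<beta>" "\<beta> < 1"
    and sums: "(\<lambda>i. \<alpha>^(Suc i + l) + \<beta>^(Suc i + l)) sums (a - \<delta>)"
  shows "\<delta> \<le> xs_pt \<delta> \<alpha> \<beta> l n"
    and "xs_pt \<delta> \<alpha> \<beta> l n < a"
    and "a - xs_pt \<delta> \<alpha> \<beta> l n \<le> 2 * \<beta>^(n+l+1) / (1 - \<beta>)"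
    and "xs_pt \<delta> \<alpha> \<beta> l \<longlonglongrightarrow> a"
proof -
  define f where "f i = \<alpha>^(Suc i + l) + \<beta>^(Suc i + l)" for i
  have f_pos: "0 < f i" for i
    unfolding f_def using assms by (simp add: add_pos_pos)
  have xs: "xs_pt \<delta> \<alpha> \<beta> l n = \<delta> + sum f {..<n}" for n
    unfolding f_def by (rule xs_pt_eq_sum)
  show "\<delta> \<le> xs_pt \<delta> \<alpha> \<beta> l n"
    unfolding xs using f_pos by (simp add: sum_nonneg less_imp_le)
  have tail: "(\<lambda>i. f (i + n)) sums (a - xs_pt \<delta> \<alpha> \<beta> l n)"
    using sums_split_initial_segment[OF sums[folded f_def], of n] unfolding xs by (simp add: algebra_simps)
  then show "xs_pt \<delta> \<alpha> \<beta> l n < a"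
    using suminf_pos[of "\<lambda>i. f (i + n)"] f_pos by (simp add: sums_iff)
  have "f (i + n) \<le> 2 * \<beta>^(n+l+1) * \<beta>^i" for i
  proof -
    have "\<alpha>^(Suc (i + n) + l) \<le> \<beta>^(Suc (i + n) + l)"
      using assms by (intro power_mono) auto
    moreover have "\<beta>^(Suc (i + n) + l) = \<beta>^(n+l+1) * \<beta>^i"
      by (simp add: power_add[symmetric] algebra_simps)
    ultimately show ?thesis
      unfolding f_def by (simp only: add.commute[of i n])
  qed
  moreover have "(\<lambda>i. 2 * \<beta>^(n+l+1) * \<beta>^i) sums (2 * \<beta>^(n+l+1) * (1 / (1 - \<beta>)))"
    using assms by (intro sums_mult geometric_sums) auto
  ultimately show "a - xs_pt \<delta> \<alpha> \<beta> l n \<le> 2 * \<beta>^(n+l+1) / (1 - \<beta>)"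
    using sums_le[OF _ tail] by fastforce
  have "(\<lambda>n. \<delta> + sum f {..<n}) \<longlonglongrightarrow> \<delta> + (a - \<delta>)"
    using sums[folded f_def] unfolding sums_def by (intro tendsto_intros)
  then show "xs_pt \<delta> \<alpha> \<beta> l \<longlonglongrightarrow> a"
    unfolding xs by simp
qed

lemma exists_bracketing_index:
  fixes x :: "nat \<Rightarrow> real"
  assumes "n \<le> K" "x n \<le> r" "r < x K"
  shows "\<exists>k\<ge>n. x k \<le> r \<and> r < x (Suc k)"
  using assms
proof (induction K rule: dec_induct)
  case (step K)
  then show ?case
    by (cases "x K \<le> r") (auto simp: not_le)
qed simp

lemma above_step_near_a:
  fixes m :: "real \<Rightarrow> real"
  assumes par: "0 < h" "h < \<alpha>" "\<alpha> < \<beta>" "\<beta> < 1" "1 < \<nu>"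
    and sums: "(\<lambda>i. \<alpha>^(Suc i + l) + \<beta>^(Suc i + l)) sums (a - \<delta>)"
    and step: "above_step m \<delta> h \<alpha> \<beta> \<nu> l"
    and zero: "m a = 0" "m (1 - a) = 0"
    and r: "r \<in> {ys_pt \<delta> \<alpha> \<beta> l n..a}"
  shows "- (h^(n+1)) \<le> m r \<and> - (h^(n+1)) \<le> m (1 - r)"
proof (cases "r = a")
  case True
  then show ?thesis
    using zero par by simp
next
  case False
  let ?x = "xs_pt \<delta> \<alpha> \<beta> l" and ?y = "ys_pt \<delta> \<alpha> \<beta> l"
  have "0 < \<alpha>" using par by simp
  have "eventually (\<lambda>K. n \<le> K \<and> r < ?x K) sequentially"
    using eventually_ge_at_top[of n] order_tendstoD(1)[OF xs_pt_bounds(4)[OF \<open>0 < \<alpha>\<close> par(3,4) sums]]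
      r False by (auto intro: eventually_conj)
  then obtain K where "n \<le> K" "r < ?x K"
    by (auto simp: eventually_sequentially)
  moreover have "?x n \<le> r"
    using xs_pt_le_ys_pt[of \<alpha> \<delta> \<beta> l n] \<open>0 < \<alpha>\<close> r by auto
  ultimately obtain k where k: "n \<le> k" "?x k \<le> r" "r < ?x (Suc k)"
    using exists_bracketing_index by blast
  show ?thesis
  proof (cases "r < ?y k")
    case True
    with r k have "n + 1 \<le> k"
      by (cases "k = n") auto
    then have "h^k \<le> h^(n+1)"
      using par by (intro power_decreasing) auto
    moreover have "- (h^k) \<le> m r \<and> - (h^k) \<le> m (1 - r)"
      using step k True unfolding above_step_def by auto
    ultimately show ?thesis
      by linarith
  next
    case False
    then have "\<nu> * h^k \<le> m r \<and> \<nu> * h^k \<le> m (1 - r)"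
      using step k unfolding above_step_def by auto
    moreover have "0 \<le> \<nu> * h^k" "0 \<le> h^(n+1)"
      using par by simp_all
    ultimately show ?thesis
      by linarith
  qed
qed

lemma H1_on_weighted_point_bound:
  fixes \<phi> g w :: "real \<Rightarrow> real" and I :: "real set"
  assumes H: "H1_on u v \<phi> g" and z: "z \<in> {u..v}"
    and mass: "set_integrable lborel {u..v} (\<lambda>r. w r * (\<phi> r)^2)" "(LBINT r:{u..v}. w r * (\<phi> r)^2) \<le> 1"
    and energy: "set_integrable lborel {u..v} (\<lambda>r. w r * (g r)^2)" "(LBINT r:{u..v}. w r * (g r)^2) \<le> L"
    and W0: "0 < W0" "\<And>r. r \<in> {u..v} \<Longrightarrow> W0 \<le> w r"
    and I: "I \<subseteq> {u..v}" "I \<in> sets lborel" "0 < measure lborel I"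
    and WI: "0 < WI" "\<And>r. r \<in> I \<Longrightarrow> WI \<le> w r"
  shows "(\<phi> z)^2 \<le> 2 / (WI * measure lborel I) + 2 * (v - u) * L / W0"
proof -
  define \<Delta> where "\<Delta> = (v - u) * L / W0"
  have g2: "set_integrable lborel {u..v} (\<lambda>r. (g r)^2)"
    using H unfolding H1_on_def by blast
  have "W0 * (LBINT r:{u..v}. (g r)^2) \<le> (LBINT r:{u..v}. w r * (g r)^2)"
    using W0(2) by (simp only: set_integral_mult_right[symmetric])
      (intro set_integral_mono set_integrable_mult_right g2 energy(1) mult_right_mono, auto)
  then have "W0 * (LBINT r:{u..v}. (g r)^2) \<le> L"
    using energy(2) by linarith
  then have "(LBINT r:{u..v}. (g r)^2) \<le> L / W0"
    using W0(1) by (simp add: field_simps mult.commute)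
  then have "(v - u) * (LBINT r:{u..v}. (g r)^2) \<le> \<Delta>"
    unfolding \<Delta>_def using z by (simp add: mult_left_mono times_divide_eq_right[symmetric] del: times_divide_eq_right)
  then have osc: "(\<phi> z - \<phi> r)^2 \<le> \<Delta>" if "r \<in> {u..v}" for r
    using H1_on_sq_diff_le[OF H z that] by linarith
  have pointwise: "WI * (\<phi> z)^2 - 2 * WI * \<Delta> \<le> 2 * (w r * (\<phi> r)^2)" if r: "r \<in> I" for r
  proof -
    have "(\<phi> z)^2 \<le> 2 * (\<phi> r)^2 + 2 * (\<phi> z - \<phi> r)^2"
      using zero_le_power2[of "\<phi> z - 2 * \<phi> r"] by (simp add: power2_eq_square algebra_simps)
    then have "(\<phi> z)^2 - 2 * \<Delta> \<le> 2 * (\<phi> r)^2"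
      using osc[of r] r I(1) by auto
    then have "WI * ((\<phi> z)^2 - 2 * \<Delta>) \<le> WI * (2 * (\<phi> r)^2)"
      using WI(1) by (intro mult_left_mono) auto
    also have "\<dots> \<le> 2 * (w r * (\<phi> r)^2)"
      using WI(2)[OF r] by (simp add: mult_right_mono)
    finally show ?thesis
      by (simp add: algebra_simps)
  qed
  have finite_I: "emeasure lborel I \<noteq> \<infinity>"
    using emeasure_mono[OF I(1), of lborel] by (auto simp: emeasure_lborel_Icc_eq top_unique)
  have const_I: "set_integrable lborel I (\<lambda>r. c)" for c :: real
    using set_integrable_subset[OF borel_integrable_atLeastAtMost'[of u v "\<lambda>_. c"] I(2,1)] by simp
  have mass_I: "set_integrable lborel I (\<lambda>r. w r * (\<phi> r)^2)"
    by (rule set_integrable_subset[OF mass(1) I(2,1)])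
  have "measure lborel I * (WI * (\<phi> z)^2 - 2 * WI * \<Delta>) \<le> 2 * (LBINT r:I. w r * (\<phi> r)^2)"
    using set_integral_mono[OF const_I _ pointwise] mass_I I(2) finite_I
    by (simp add: set_integral_const)
  also have "(LBINT r:I. w r * (\<phi> r)^2) \<le> (LBINT r:{u..v}. w r * (\<phi> r)^2)"
  proof (rule set_integral_mono_set[OF mass(1) I(2,1)])
    fix r assume "r \<in> {u..v} - I"
    then have "0 \<le> w r"
      using W0 by (meson DiffD1 less_le_trans less_imp_le)
    then show "0 \<le> w r * (\<phi> r)^2"
      by simp
  qed
  finally have "measure lborel I * (WI * (\<phi> z)^2 - 2 * WI * \<Delta>) \<le> 2"
    using mass(2) by linarith
  then have "(\<phi> z)^2 - 2 * \<Delta> \<le> 2 / (WI * measure lborel I)"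
    using I(3) WI(1) by (simp add: field_simps)
  moreover have "2 * \<Delta> = 2 * (v - u) * L / W0"
    unfolding \<Delta>_def by simp
  ultimately show ?thesis
    by linarith
qed

lemma step_point_bound:
  fixes \<phi> g m :: "real \<Rightarrow> real" and d l n :: nat and I :: "real set"
  assumes H: "H1_on 0 1 \<phi> g"
    and mass: "set_integrable lborel {0..1} (\<lambda>r. r^(d-1) * exp (2 * s * m r) * (\<phi> r)^2)"
      "(LBINT r:{0..1}. r^(d-1) * exp (2 * s * m r) * (\<phi> r)^2) \<le> 1"
    and energy: "set_integrable lborel {0..1} (\<lambda>r. r^(d-1) * exp (2 * s * m r) * (g r)^2)"
      "(LBINT r:{0..1}. r^(d-1) * exp (2 * s * m r) * (g r)^2) \<le> L"
    and "0 \<le> s" "0 < \<delta>" "0 < \<beta>" "\<beta> < 1"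
    and uv: "\<delta> \<le> u" "v \<le> 1" "z \<in> {u..v}" "v - u \<le> 2 * \<beta>^(n+l+1) / (1 - \<beta>)"
    and I: "I \<subseteq> {u..v}" "I \<in> sets lborel" "measure lborel I = \<beta>^(n+l+1)"
    and m_I: "\<And>r. r \<in> I \<Longrightarrow> \<nu> * h^n \<le> m r"
    and m_uv: "\<And>r. r \<in> {u..v} \<Longrightarrow> - (h^(n+1)) \<le> m r"
  shows "(\<phi> z)^2 \<le> 2 / (\<delta>^(d-1) * \<beta>^(l+1)) * (exp (- (2 * s * \<nu> * h^n)) / \<beta>^n)
    + 4 * \<beta>^(l+1) * L / ((1 - \<beta>) * \<delta>^(d-1)) * (\<beta>^n * exp (2 * s * h^(n+1)))"
proof -
  define w where "w r = r^(d-1) * exp (2 * s * m r)" for r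
  define WI where "WI = \<delta>^(d-1) * exp (2 * s * (\<nu> * h^n))"
  define W0 where "W0 = \<delta>^(d-1) * exp (2 * s * (- (h^(n+1))))"
  have uv_sub: "{u..v} \<subseteq> {0..1}"
    using uv \<open>0 < \<delta>\<close> by auto
  have w_lower: "\<delta>^(d-1) * exp (2 * s * P) \<le> w r" if "r \<in> {u..v}" "P \<le> m r" for r P
    unfolding w_def using that uv \<open>0 \<le> s\<close> \<open>0 < \<delta>\<close>
    by (intro mult_mono power_mono) (auto intro: mult_left_mono)
  have w_nonneg: "0 \<le> w r" if "0 \<le> r" for r
    unfolding w_def using that by simp
  have restrict: "set_integrable lborel {u..v} (\<lambda>r. w r * f r)
      \<and> (LBINT r:{u..v}. w r * f r) \<le> (LBINT r:{0..1}. w r * f r)"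
    if "set_integrable lborel {0..1} (\<lambda>r. w r * f r)" "\<And>r. 0 \<le> f r" for f
    using that w_nonneg uv_sub
    by (auto intro!: set_integrable_subset[OF that(1)] set_integral_mono_set[OF that(1)])
  have point: "(\<phi> z)^2 \<le> 2 / (WI * measure lborel I) + 2 * (v - u) * L / W0"
  proof (rule H1_on_weighted_point_bound[where w = w and \<phi> = \<phi> and g = g and z = z])
    show "H1_on u v \<phi> g"
      using H1_on_subinterval[OF H] uv \<open>0 < \<delta>\<close> by auto
    show "set_integrable lborel {u..v} (\<lambda>r. w r * (\<phi> r)^2)" "(LBINT r:{u..v}. w r * (\<phi> r)^2) \<le> 1"
      using restrict[of "\<lambda>r. (\<phi> r)^2"] mass unfolding w_def by auto
    show "set_integrable lborel {u..v} (\<lambda>r. w r * (g r)^2)" "(LBINT r:{u..v}. w r * (g r)^2) \<le> L"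
      using restrict[of "\<lambda>r. (g r)^2"] energy unfolding w_def by auto
    show "0 < W0" "0 < WI" "0 < measure lborel I"
      unfolding W0_def WI_def using I(3) \<open>0 < \<delta>\<close> \<open>0 < \<beta>\<close> by auto
    show "W0 \<le> w r" if "r \<in> {u..v}" for r
      unfolding W0_def using w_lower that m_uv by blast
    show "WI \<le> w r" if "r \<in> I" for r
      unfolding WI_def using w_lower that m_I I(1) by blast
  qed (use uv I in auto)
  have "2 * (v - u) * L / W0 \<le> 2 * (2 * \<beta>^(n+l+1) / (1 - \<beta>)) * L / W0"
  proof -
    have "0 \<le> (LBINT r:{0..1}. r^(d-1) * exp (2 * s * m r) * (g r)^2)"
      by (intro set_integral_nonneg) simp
    then have "0 \<le> L"
      using energy(2) by linarith
    moreover have "0 < W0"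
      unfolding W0_def using \<open>0 < \<delta>\<close> by simp
    ultimately show ?thesis
      using uv(4) by (intro divide_right_mono mult_right_mono mult_left_mono) auto
  qed
  moreover have "2 / (WI * measure lborel I) = 2 / (\<delta>^(d-1) * \<beta>^(l+1)) * (exp (- (2 * s * \<nu> * h^n)) / \<beta>^n)"
    unfolding WI_def I(3) using \<open>0 < \<delta>\<close> \<open>0 < \<beta>\<close> by (simp add: power_add exp_minus field_simps)
  moreover have "2 * (2 * \<beta>^(n+l+1) / (1 - \<beta>)) * L / W0
      = 4 * \<beta>^(l+1) * L / ((1 - \<beta>) * \<delta>^(d-1)) * (\<beta>^n * exp (2 * s * h^(n+1)))"
    unfolding W0_def using \<open>0 < \<delta>\<close> \<open>\<beta> < 1\<close> by (simp add: power_add exp_minus field_simps)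
  ultimately show ?thesis
    using point by linarith
qed

lemma boundary_point_bound:
  fixes \<phi> g m :: "real \<Rightarrow> real" and d l n :: nat
  assumes H: "H1_on 0 1 \<phi> g"
    and mass: "set_integrable lborel {0..1} (\<lambda>r. r^(d-1) * exp (2 * s * m r) * (\<phi> r)^2)"
      "(LBINT r:{0..1}. r^(d-1) * exp (2 * s * m r) * (\<phi> r)^2) \<le> 1"
    and energy: "set_integrable lborel {0..1} (\<lambda>r. r^(d-1) * exp (2 * s * m r) * (g r)^2)"
      "(LBINT r:{0..1}. r^(d-1) * exp (2 * s * m r) * (g r)^2) \<le> L"
    and "0 \<le> s" "a \<le> b" "a + b = 1"
    and par: "0 < \<delta>" "0 < h" "h < \<alpha>" "\<alpha> < \<beta>" "\<beta> < 1" "1 < \<nu>"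
    and sums: "(\<lambda>i. \<alpha>^(Suc i + l) + \<beta>^(Suc i + l)) sums (a - \<delta>)"
    and step: "above_step m \<delta> h \<alpha> \<beta> \<nu> l"
    and zero: "m a = 0" "m b = 0"
    and z: "z \<in> {a, b}"
  shows "(\<phi> z)^2 \<le> 2 / (\<delta>^(d-1) * \<beta>^(l+1)) * (exp (- (2 * s * \<nu> * h^n)) / \<beta>^n)
    + 4 * \<beta>^(l+1) * L / ((1 - \<beta>) * \<delta>^(d-1)) * (\<beta>^n * exp (2 * s * h^(n+1)))"
proof -
  let ?x = "xs_pt \<delta> \<alpha> \<beta> l" and ?y = "ys_pt \<delta> \<alpha> \<beta> l"
  have "0 < \<alpha>" "0 < \<beta>"
    using par by auto
  note xs = xs_pt_bounds[OF \<open>0 < \<alpha>\<close> par(4,5) sums]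
  have "?x n \<le> ?y n" "?x (Suc n) = ?y n + \<beta>^(n+l+1)"
    using xs_pt_le_ys_pt \<open>0 < \<alpha>\<close> xs_pt_Suc by auto
  moreover note xs(1,3)[of n] xs(2)[of "Suc n"]
  moreover have \<beta>_pow: "0 < \<beta>^(n+l+1)"
    using \<open>0 < \<beta>\<close> by simp
  ultimately have y: "\<delta> \<le> ?y n" "?y n < a" "a - ?y n \<le> 2 * \<beta>^(n+l+1) / (1 - \<beta>)"
    and I_length: "?x (Suc n) - ?y n = \<beta>^(n+l+1)"
    by auto
  have near: "- (h^(n+1)) \<le> m r \<and> - (h^(n+1)) \<le> m (1 - r)" if "r \<in> {?y n..a}" for r
    using above_step_near_a[OF par(2-6) sums step] zero \<open>a + b = 1\<close> that
    by (metis add_diff_cancel_left')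
  have plateau: "\<nu> * h^n \<le> m r \<and> \<nu> * h^n \<le> m (1 - r)" if "r \<in> {?y n..<?x (Suc n)}" for r
    using step that unfolding above_step_def by blast
  note bound = step_point_bound[OF H mass energy \<open>0 \<le> s\<close> par(1) \<open>0 < \<beta>\<close> par(5)]
  from z show ?thesis
  proof
    assume "z = a"
    show ?thesis
      unfolding \<open>z = a\<close>
    proof (rule bound[of "?y n" a _ n l "{?y n..<?x (Suc n)}"])
      show "measure lborel {?y n..<?x (Suc n)} = \<beta>^(n+l+1)"
        using I_length \<beta>_pow by simp
    qed (use y near plateau xs(2)[of "Suc n"] \<open>a \<le> b\<close> \<open>a + b = 1\<close> in auto)
  next
    assume "z \<in> {b}"
    then have "z = b" by simp
    \<comment> \<open>near \<open>b\<close> use the reflections \<open>r \<mapsto> 1 - r\<close> of the intervals used near \<open>a\<close>\<close>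
    show ?thesis
      unfolding \<open>z = b\<close>
    proof (rule bound[of b "1 - ?y n" _ n l "{1 - ?x (Suc n)<..1 - ?y n}"])
      show "measure lborel {1 - ?x (Suc n)<..1 - ?y n} = \<beta>^(n+l+1)"
        using I_length \<beta>_pow by simp
      show "\<nu> * h^n \<le> m r" if "r \<in> {1 - ?x (Suc n)<..1 - ?y n}" for r
        using plateau[of "1 - r"] that by auto
      show "- (h^(n+1)) \<le> m r" if "r \<in> {b..1 - ?y n}" for r
        using near[of "1 - r"] that \<open>a + b = 1\<close> by auto
    qed (use y xs(2)[of "Suc n"] par(1) \<open>a \<le> b\<close> \<open>a + b = 1\<close> in auto)
  qed
qed

section \<open>Choice of the plateau index\<close>

lemma exists_power_bracket:
  fixes h \<tau> s :: real
  assumes "0 < h" "h < 1" "0 < \<tau>" "\<tau> \<le> s"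
  shows "\<exists>n. h * \<tau> \<le> s * h^n \<and> s * h^n \<le> \<tau>"
proof -
  obtain K where "h^K < \<tau> / s"
    using real_arch_pow_inv[of "\<tau> / s" h] assms by auto
  then have "- \<tau> < - (s * h^K)"
    using assms by (simp add: field_simps)
  moreover have "- (s * h^0) \<le> - \<tau>"
    using assms by simp
  ultimately obtain k where "- (s * h^k) \<le> - \<tau>" "- \<tau> < - (s * h^Suc k)"
    using exists_bracketing_index[of 0 K "\<lambda>k. - (s * h^k)" "- \<tau>"] by auto
  then have "h * \<tau> \<le> s * h^Suc k" "s * h^Suc k \<le> \<tau>"
    using assms by (auto simp: mult.left_commute intro: mult_left_mono)
  then show ?thesis
    by blast
qed

lemma step_terms_le:
  fixes h \<beta> \<theta> \<nu> s \<tau> :: real and n :: nat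
  assumes "0 < h" "h powr \<theta> = \<beta>" "0 \<le> \<theta>" "0 < \<nu>" "0 < s" "0 < \<tau>"
    and "h * \<tau> \<le> s * h^n" "s * h^n \<le> \<tau>"
  shows "exp (- (2 * s * \<nu> * h^n)) / \<beta>^n \<le> exp (- (2 * \<nu> * (h * \<tau>))) * (h * \<tau>) powr (- \<theta>) * s powr \<theta>"
    and "\<beta>^n * exp (2 * s * h^(n+1)) \<le> exp (2 * h * \<tau>) * \<tau> powr \<theta> * s powr (- \<theta>)"
proof -
  define u where "u = s * h^n"
  have "0 < u" "0 < h * \<tau>"
    unfolding u_def using assms by auto
  have "\<beta>^n = (h^n) powr \<theta>"
    using \<open>0 < h\<close> by (simp add: assms(2)[symmetric] powr_realpow[symmetric] powr_powr mult.commute)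
  also have "\<dots> = u powr \<theta> * s powr (- \<theta>)"
    unfolding u_def using assms by (simp add: powr_mult powr_minus)
  finally have \<beta>n: "\<beta>^n = u powr \<theta> * s powr (- \<theta>)" .
  have "exp (- (2 * s * \<nu> * h^n)) / \<beta>^n = exp (- (2 * \<nu> * u)) * u powr (- \<theta>) * s powr \<theta>"
    unfolding \<beta>n u_def using assms by (simp add: powr_minus field_simps)
  also have "\<dots> \<le> exp (- (2 * \<nu> * (h * \<tau>))) * (h * \<tau>) powr (- \<theta>) * s powr \<theta>"
  proof -
    have "exp (- (2 * \<nu> * u)) \<le> exp (- (2 * \<nu> * (h * \<tau>)))" "u powr (- \<theta>) \<le> (h * \<tau>) powr (- \<theta>)"
      using assms \<open>0 < h * \<tau>\<close> unfolding u_def by (auto intro: powr_mono2')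
    then show ?thesis
      by (intro mult_right_mono mult_mono) auto
  qed
  finally show "exp (- (2 * s * \<nu> * h^n)) / \<beta>^n \<le> exp (- (2 * \<nu> * (h * \<tau>))) * (h * \<tau>) powr (- \<theta>) * s powr \<theta>" .
  have "\<beta>^n * exp (2 * s * h^(n+1)) = exp (2 * h * u) * u powr \<theta> * s powr (- \<theta>)"
    unfolding \<beta>n u_def by (simp add: algebra_simps)
  also have "\<dots> \<le> exp (2 * h * \<tau>) * \<tau> powr \<theta> * s powr (- \<theta>)"
  proof -
    have "exp (2 * h * u) \<le> exp (2 * h * \<tau>)" "u powr \<theta> \<le> \<tau> powr \<theta>"
      using assms \<open>0 < u\<close> unfolding u_def by (auto intro: powr_mono2)
    then show ?thesis
      by (intro mult_right_mono mult_mono) auto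
  qed
  finally show "\<beta>^n * exp (2 * s * h^(n+1)) \<le> exp (2 * h * \<tau>) * \<tau> powr \<theta> * s powr (- \<theta>)" .
qed

lemma step_exponents_exist:
  fixes h \<beta> \<nu> :: real
  assumes "0 < h" "h < \<beta>" "\<beta> < 1" "1 < \<nu>"
  obtains \<theta> A \<kappa> where "0 < \<theta>" "0 < A" "0 < \<kappa>" "h powr \<theta> = \<beta>"
    "2 * h * \<kappa> = \<theta> - A" "2 * \<nu> * h * \<kappa> = \<theta> + A"
proof -
  define \<theta> where "\<theta> = ln \<beta> / ln h"
  define A where "A = \<theta> * (\<nu> - 1) / (\<nu> + 1)"
  define \<kappa> where "\<kappa> = \<theta> / (h * (\<nu> + 1))"
  \<comment> \<open>\<open>h powr \<theta> = \<beta>\<close> turns \<open>\<beta>^n\<close> into \<open>(h^n) powr \<theta>\<close>; \<open>\<kappa>\<close> lies in the window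
    \<open>\<theta> / (2 \<nu> h) < \<kappa> < \<theta> / (2 h)\<close> with equal margins \<open>A\<close>, so that for \<open>s h^n \<approx> \<kappa> ln s\<close>
    both step terms decay like a power of \<open>ln s\<close> times \<open>s powr (- A)\<close>\<close>
  have "ln h < ln \<beta>" "ln \<beta> < 0"
    using assms by auto
  then have "0 < \<theta>"
    unfolding \<theta>_def by (simp add: divide_neg_neg)
  have "h powr \<theta> = \<beta>"
    unfolding \<theta>_def powr_def using assms \<open>ln h < ln \<beta>\<close> \<open>ln \<beta> < 0\<close> by simp
  have "0 < A"
    unfolding A_def using \<open>0 < \<theta>\<close> assms by (auto simp: field_simps)
  have "0 < \<kappa>"
    unfolding \<kappa>_def using assms \<open>0 < \<theta>\<close> by simp
  have "h \<noteq> 0" "\<nu> + 1 \<noteq> 0"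
    using assms by auto
  then have "2 * h * \<kappa> = 2 * \<theta> / (\<nu> + 1)"
    unfolding \<kappa>_def by simp
  moreover have "\<theta> - A = 2 * \<theta> / (\<nu> + 1)" "\<theta> + A = \<nu> * (2 * \<theta> / (\<nu> + 1))"
    unfolding A_def using \<open>\<nu> + 1 \<noteq> 0\<close> by (simp_all add: field_simps)
  ultimately have "2 * h * \<kappa> = \<theta> - A" "\<theta> + A = \<nu> * (\<theta> - A)"
    by simp_all
  moreover have "2 * \<nu> * h * \<kappa> = \<nu> * (2 * h * \<kappa>)"
    by (simp add: algebra_simps)
  ultimately have "2 * h * \<kappa> = \<theta> - A" "2 * \<nu> * h * \<kappa> = \<theta> + A"
    by simp_all
  with that \<open>0 < \<theta>\<close> \<open>0 < A\<close> \<open>0 < \<kappa>\<close> \<open>h powr \<theta> = \<beta>\<close> show ?thesis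
    by blast
qed

lemma eventually_exists_small_step_terms:
  fixes h \<beta> \<nu> \<epsilon> :: real
  assumes "0 < h" "h < \<beta>" "\<beta> < 1" "1 < \<nu>" "0 < \<epsilon>"
  shows "eventually (\<lambda>s. \<exists>n. exp (- (2 * s * \<nu> * h^n)) / \<beta>^n \<le> \<epsilon>
    \<and> \<beta>^n * exp (2 * s * h^(n+1)) \<le> \<epsilon>) at_top"
proof -
  obtain \<theta> A \<kappa> where "0 < \<theta>" "0 < A" "0 < \<kappa>" "h powr \<theta> = \<beta>"
    and exponents: "2 * h * \<kappa> = \<theta> - A" "2 * \<nu> * h * \<kappa> = \<theta> + A"
    using step_exponents_exist[OF assms(1-4)] .
  have "((\<lambda>s. (h * \<kappa> * ln s) powr (- \<theta>) * s powr (- A)) \<longlongrightarrow> 0) at_top"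
    "((\<lambda>s. (\<kappa> * ln s) powr \<theta> * s powr (- A)) \<longlongrightarrow> 0) at_top"
    using \<open>0 < \<theta>\<close> \<open>0 < A\<close> \<open>0 < \<kappa>\<close> \<open>0 < h\<close> by real_asymp+
  from this[THEN order_tendstoD(2), OF \<open>0 < \<epsilon>\<close>]
  have "eventually (\<lambda>s. (h * \<kappa> * ln s) powr (- \<theta>) * s powr (- A) \<le> \<epsilon>) at_top"
    "eventually (\<lambda>s. (\<kappa> * ln s) powr \<theta> * s powr (- A) \<le> \<epsilon>) at_top"
    by (auto elim: eventually_mono)
  moreover have "eventually (\<lambda>s. \<kappa> * ln s \<le> s) at_top"
    using \<open>0 < \<kappa>\<close> by real_asymp
  ultimately have "eventually (\<lambda>s. 1 < s \<and> \<kappa> * ln s \<le> s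
      \<and> (h * \<kappa> * ln s) powr (- \<theta>) * s powr (- A) \<le> \<epsilon> \<and> (\<kappa> * ln s) powr \<theta> * s powr (- A) \<le> \<epsilon>) at_top"
    by (intro eventually_conj eventually_gt_at_top)
  then show ?thesis
  proof eventually_elim
    case (elim s)
    define \<tau> where "\<tau> = \<kappa> * ln s"
    have "1 < s"
      using elim by simp
    have "0 < \<tau>"
      unfolding \<tau>_def using elim \<open>0 < \<kappa>\<close> by simp
    obtain n where n: "h * \<tau> \<le> s * h^n" "s * h^n \<le> \<tau>"
      using exists_power_bracket[of h \<tau> s] assms \<open>0 < \<tau>\<close> elim unfolding \<tau>_def by auto
    have "0 < \<nu>" "0 < s"
      using assms \<open>1 < s\<close> by auto
    note step = step_terms_le[OF \<open>0 < h\<close> \<open>h powr \<theta> = \<beta>\<close> less_imp_le[OF \<open>0 < \<theta>\<close>] this \<open>0 < \<tau>\<close> n]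
    have "2 * \<nu> * (h * \<tau>) = (2 * \<nu> * h * \<kappa>) * ln s" "2 * h * \<tau> = (2 * h * \<kappa>) * ln s"
      unfolding \<tau>_def by (simp_all add: algebra_simps)
    then have exp_eq: "exp (- (2 * \<nu> * (h * \<tau>))) = s powr (- (\<theta> + A))" "exp (2 * h * \<tau>) = s powr (\<theta> - A)"
      unfolding exponents using \<open>1 < s\<close> by (simp_all add: powr_def algebra_simps)
    have "s powr (- (\<theta> + A)) * s powr \<theta> = s powr (- A)" "s powr (\<theta> - A) * s powr (- \<theta>) = s powr (- A)"
      by (simp_all add: powr_add[symmetric])
    then have "exp (- (2 * \<nu> * (h * \<tau>))) * (h * \<tau>) powr (- \<theta>) * s powr \<theta> = (h * \<tau>) powr (- \<theta>) * s powr (- A)"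
      "exp (2 * h * \<tau>) * \<tau> powr \<theta> * s powr (- \<theta>) = \<tau> powr \<theta> * s powr (- A)"
      unfolding exp_eq by (metis mult.assoc mult.commute)+
    note step' = step(1)[unfolded this(1)] step(2)[unfolded this(2)]
    have "exp (- (2 * s * \<nu> * h^n)) / \<beta>^n \<le> \<epsilon>" "\<beta>^n * exp (2 * s * h^(n+1)) \<le> \<epsilon>"
      using step' elim unfolding \<tau>_def by (auto simp: mult.assoc)
    then show ?case
      by blast
  qed
qed

section \<open>The lower bound for \<open>\<lambda>(s)\<close>\<close>

lemma weighted_integral_restrict_le:
  fixes m f :: "real \<Rightarrow> real" and d :: nat
  assumes ab: "0 \<le> a" "b \<le> 1" and m_zero: "\<And>r. r \<in> {a..b} \<Longrightarrow> m r = 0"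
    and f: "set_integrable lborel {0..1} (\<lambda>r. r^(d-1) * exp (2 * s * m r) * f r)"
      "\<And>r. r \<in> {0..1} - {a..b} \<Longrightarrow> 0 \<le> f r"
  shows "(LBINT r:{a..b}. r^(d-1) * f r) \<le> (LBINT r:{0..1}. r^(d-1) * exp (2 * s * m r) * f r)"
proof -
  have "(LBINT r:{a..b}. r^(d-1) * f r) = (LBINT r:{a..b}. r^(d-1) * exp (2 * s * m r) * f r)"
    using m_zero by (intro set_lebesgue_integral_cong) auto
  also have "\<dots> \<le> (LBINT r:{0..1}. r^(d-1) * exp (2 * s * m r) * f r)"
    using f ab by (intro set_integral_mono_set) auto
  finally show ?thesis .
qed

lemma rayleigh_quotient_lower_bound:
  fixes d :: nat and a b Bc s e :: real and m c \<phi> g :: "real \<Rightarrow> real"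
  defines "\<Lambda> \<equiv> eig_D d c a b"
  defines "K \<equiv> 2 * (1 + (\<bar>\<Lambda>\<bar> + 1)) / (b - a) + 4 / (b - a)^2 + 3 * Bc"
  assumes ab: "0 < a" "a < b" "b \<le> 1"
    and m_cont: "continuous_on {0..1} m" and c_cont: "continuous_on {0..1} c"
    and m_zero: "\<And>r. r \<in> {a..b} \<Longrightarrow> m r = 0" and c_pos: "\<And>r. r \<in> {0..1} \<Longrightarrow> 0 < c r"
    and c_gt: "\<And>r. r \<in> {0..a} \<union> {b..1} \<Longrightarrow> \<Lambda> < c r"
    and Bc: "\<And>r. r \<in> {a..b} \<Longrightarrow> \<bar>c r - \<Lambda>\<bar> \<le> Bc"
    and H: "H1_on 0 1 \<phi> g"
    and mass: "(LBINT r:{0..1}. r^(d-1) * exp (2 * s * m r) * (\<phi> r)^2) = 1"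
    and boundary: "(LBINT r:{0..1}. r^(d-1) * exp (2 * s * m r) * (g r)^2) \<le> \<bar>\<Lambda>\<bar> + 1
      \<Longrightarrow> \<bar>\<phi> a\<bar> \<le> e \<and> \<bar>\<phi> b\<bar> \<le> e"
    and e: "0 \<le> e" "e \<le> 1"
  shows "\<Lambda> - e * K \<le> (LBINT r:{0..1}. r^(d-1) * exp (2 * s * m r) * ((g r)^2 + c r * (\<phi> r)^2))"
proof -
  define w where "w r = r^(d-1) * exp (2 * s * m r)" for r
  define G where "G = (LBINT r:{0..1}. w r * (g r)^2)"
  define P where "P = (LBINT r:{0..1}. w r * (c r * (\<phi> r)^2))"
  have "continuous_on {0..1} w"
    unfolding w_def using m_cont by (intro continuous_intros)
  note weighted = H1_on_weighted_integrable[OF H this]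
  have iwc: "set_integrable lborel {0..1} (\<lambda>r. w r * (c r * (\<phi> r)^2))"
    by (rule weighted(3)[OF c_cont])
  have iwcl: "set_integrable lborel {0..1} (\<lambda>r. w r * ((c r - \<Lambda>) * (\<phi> r)^2))"
    by (rule weighted(3)) (intro continuous_intros c_cont)
  have Q_split: "(LBINT r:{0..1}. w r * ((g r)^2 + c r * (\<phi> r)^2)) = G + P"
    unfolding G_def P_def using weighted(1) iwc by (simp add: distrib_left)
  have "0 \<le> Bc"
    using Bc[of a] ab by force
  then have "0 \<le> e * K"
    unfolding K_def using ab e by (intro mult_nonneg_nonneg add_nonneg_nonneg) auto
  have "0 \<le> P"
    unfolding P_def w_def using c_pos by (intro set_integral_nonneg mult_nonneg_nonneg) (auto intro: less_imp_le)
  show ?thesis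
  proof (cases "\<Lambda> \<le> G + P")
    case True
    then show ?thesis
      using Q_split \<open>0 \<le> e * K\<close> unfolding w_def by linarith
  next
    case False
    \<comment> \<open>a quotient below \<open>\<Lambda>\<close> bounds the weighted energy, which makes the boundary values small\<close>
    then have energy: "G \<le> \<bar>\<Lambda>\<bar> + 1"
      using \<open>0 \<le> P\<close> by linarith
    have restrict: "(LBINT r:{a..b}. r^(d-1) * f r) \<le> (LBINT r:{0..1}. w r * f r)"
      if "set_integrable lborel {0..1} (\<lambda>r. w r * f r)" "\<And>r. r \<in> {0..1} - {a..b} \<Longrightarrow> 0 \<le> f r" for f
      using weighted_integral_restrict_le[of a b m d s f] that ab m_zero unfolding w_def by auto
    have "- e * K \<le> (LBINT r:{a..b}. r^(d-1) * (g r)^2) + (LBINT r:{a..b}. r^(d-1) * ((c r - \<Lambda>) * (\<phi> r)^2))"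
      unfolding K_def \<Lambda>_def
    proof (rule dirichlet_energy_defect_bound)
      show "H1_on a b \<phi> g"
        using H1_on_subinterval[OF H] ab by simp
      show "(LBINT r:{a..b}. r^(d-1) * (g r)^2) \<le> \<bar>eig_D d c a b\<bar> + 1"
        using restrict[OF weighted(1)] energy unfolding G_def \<Lambda>_def by fastforce
      show "(LBINT r:{a..b}. r^(d-1) * (\<phi> r)^2) \<le> 1"
        using restrict[OF weighted(2)] mass unfolding w_def by fastforce
      show "\<bar>\<phi> a\<bar> \<le> e" "\<bar>\<phi> b\<bar> \<le> e"
        using boundary energy unfolding G_def w_def by auto
    qed (use ab c_cont c_pos Bc e in \<open>auto simp: \<Lambda>_def intro: continuous_on_subset\<close>)
    also have "\<dots> \<le> G + (LBINT r:{0..1}. w r * ((c r - \<Lambda>) * (\<phi> r)^2))"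
      unfolding G_def
    proof (intro add_mono restrict[OF weighted(1)] restrict[OF iwcl])
      fix r assume "r \<in> {0..1} - {a..b}"
      then have "\<Lambda> < c r"
        by (intro c_gt) auto
      then show "0 \<le> (c r - \<Lambda>) * (\<phi> r)^2"
        by simp
    qed simp
    also have "(LBINT r:{0..1}. w r * ((c r - \<Lambda>) * (\<phi> r)^2)) = P - \<Lambda>"
      using iwc weighted(2) mass unfolding P_def w_def by (simp add: algebra_simps)
    finally show ?thesis
      using Q_split unfolding w_def by linarith
  qed
qed

lemma eig_s_admissible_nonempty:
  fixes m c :: "real \<Rightarrow> real" and d :: nat
  assumes m_cont: "continuous_on {0..1} m" and "0 \<le> s"
  shows "{(LBINT r:{0..1}. r^(d-1) * exp (2 * s * m r) * ((g r)^2 + c r * (\<phi> r)^2)) | \<phi> g.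
    H1_on 0 1 \<phi> g \<and> (LBINT r:{0..1}. r^(d-1) * exp (2 * s * m r) * (\<phi> r)^2) = 1} \<noteq> {}"
proof -
  define w where "w r = r^(d-1) * exp (2 * s * m r)" for r
  define Z where "Z = (LBINT r:{0..1}. w r)"
  have iw: "set_integrable lborel {0..1} w"
    unfolding w_def using m_cont by (intro borel_integrable_atLeastAtMost' continuous_intros)
  obtain M where M: "\<And>r. r \<in> {0..1} \<Longrightarrow> norm (m r) \<le> M"
    using continuous_on_compact_bound[OF compact_Icc m_cont] by blast
  define w0 where "w0 = (1/2)^(d-1) * exp (2 * s * (- M))"
  have "w0 \<le> w r" if "r \<in> {1/2..1}" for r
  proof -
    have "s * (- M) \<le> s * m r"
      using M[of r] that \<open>0 \<le> s\<close> by (intro mult_left_mono) auto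
    then show ?thesis
      unfolding w0_def w_def using that by (intro mult_mono power_mono) (auto simp: algebra_simps)
  qed
  then have "(LBINT r:{1/2..1::real}. w0) \<le> (LBINT r:{1/2..1}. w r)"
    using set_integrable_subset[OF iw, of "{1/2..1}"]
    by (intro set_integral_mono[OF borel_integrable_atLeastAtMost'[OF continuous_on_const]]) auto
  also have "\<dots> \<le> Z"
    unfolding Z_def w_def by (intro set_integral_mono_set[OF iw[unfolded w_def]]) auto
  finally have "w0 / 2 \<le> Z"
    by (simp add: set_integral_const)
  moreover have "0 < w0"
    unfolding w0_def by simp
  ultimately have "0 < Z"
    by linarith
  define t where "t = 1 / sqrt Z"
  have "H1_on 0 1 (\<lambda>_. t) (\<lambda>_. 0)"
    unfolding H1_on_def set_borel_measurable_def set_integrable_def by simp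
  moreover have "(LBINT r:{0..1}. r^(d-1) * exp (2 * s * m r) * t^2) = 1"
    using \<open>0 < Z\<close> unfolding Z_def w_def t_def by (simp add: power_divide)
  ultimately show ?thesis
    by blast
qed

lemma Liminf_ereal_ge:
  fixes f :: "'a \<Rightarrow> real"
  assumes "\<And>\<epsilon>. 0 < \<epsilon> \<Longrightarrow> eventually (\<lambda>x. c - \<epsilon> \<le> f x) F"
  shows "ereal c \<le> Liminf F (\<lambda>x. ereal (f x))"
  unfolding le_Liminf_iff
proof (intro allI impI)
  fix y assume "y < ereal c"
  then show "eventually (\<lambda>x. y < ereal (f x)) F"
  proof (cases y)
    case (real y')
    with \<open>y < ereal c\<close> have "0 < (c - y') / 2"
      by simp
    from assms[OF this] show ?thesis
    proof (rule eventually_mono)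
      fix x assume "c - (c - y') / 2 \<le> f x"
      moreover have "y' < c"
        using real \<open>y < ereal c\<close> by simp
      ultimately have "y' < f x"
        by (simp add: field_simps)
      then show "y < ereal (f x)"
        using real by simp
    qed
  qed auto
qed

lemma eig_s_lower_bound:
  fixes d l n :: nat and a b s e Bc \<delta> h \<alpha> \<beta> \<nu> :: real and m c :: "real \<Rightarrow> real"
  defines "\<Lambda> \<equiv> eig_D d c a b"
  defines "L \<equiv> \<bar>\<Lambda>\<bar> + 1"
  assumes ab: "0 < a" "a < b" "a + b = 1"
    and m_cont: "continuous_on {0..1} m" and c_cont: "continuous_on {0..1} c"
    and m_zero: "\<And>r. r \<in> {a..b} \<Longrightarrow> m r = 0" and c_pos: "\<And>r. r \<in> {0..1} \<Longrightarrow> 0 < c r"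
    and c_gt: "\<And>r. r \<in> {0..a} \<union> {b..1} \<Longrightarrow> \<Lambda> < c r"
    and Bc: "\<And>r. r \<in> {a..b} \<Longrightarrow> \<bar>c r - \<Lambda>\<bar> \<le> Bc"
    and par: "0 < \<delta>" "0 < h" "h < \<alpha>" "\<alpha> < \<beta>" "\<beta> < 1" "1 < \<nu>"
    and sums: "(\<lambda>i. \<alpha>^(Suc i + l) + \<beta>^(Suc i + l)) sums (a - \<delta>)"
    and step: "above_step m \<delta> h \<alpha> \<beta> \<nu> l"
    and "0 \<le> s" "0 \<le> e" "e \<le> 1"
    and small: "2 / (\<delta>^(d-1) * \<beta>^(l+1)) * (exp (- (2 * s * \<nu> * h^n)) / \<beta>^n)
      + 4 * \<beta>^(l+1) * L / ((1 - \<beta>) * \<delta>^(d-1)) * (\<beta>^n * exp (2 * s * h^(n+1))) \<le> e^2"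
  shows "\<Lambda> - e * (2 * (1 + L) / (b - a) + 4 / (b - a)^2 + 3 * Bc) \<le> eig_s d m c s"
  unfolding eig_s_def
proof (rule cInf_greatest[OF eig_s_admissible_nonempty[OF m_cont \<open>0 \<le> s\<close>]], safe)
  fix \<phi> g :: "real \<Rightarrow> real"
  assume H: "H1_on 0 1 \<phi> g"
    and mass: "(LBINT r:{0..1}. r^(d-1) * exp (2 * s * m r) * (\<phi> r)^2) = 1"
  have "continuous_on {0..1} (\<lambda>r. r^(d-1) * exp (2 * s * m r))"
    using m_cont by (intro continuous_intros)
  note weighted = H1_on_weighted_integrable[OF H this]
  show "\<Lambda> - e * (2 * (1 + L) / (b - a) + 4 / (b - a)^2 + 3 * Bc)
      \<le> (LBINT r:{0..1}. r^(d-1) * exp (2 * s * m r) * ((g r)^2 + c r * (\<phi> r)^2))"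
    unfolding L_def \<Lambda>_def
  proof (rule rayleigh_quotient_lower_bound)
    assume energy: "(LBINT r:{0..1}. r^(d-1) * exp (2 * s * m r) * (g r)^2) \<le> \<bar>eig_D d c a b\<bar> + 1"
    have "(\<phi> z)^2 \<le> e^2" if "z \<in> {a, b}" for z
      using boundary_point_bound[OF H weighted(2) _ weighted(1) energy \<open>0 \<le> s\<close> _ ab(3) par sums step
          m_zero[of a] m_zero[of b] that, of n]
        small mass ab unfolding L_def \<Lambda>_def by auto
    then show "\<bar>\<phi> a\<bar> \<le> e \<and> \<bar>\<phi> b\<bar> \<le> e"
      using \<open>0 \<le> e\<close> by (auto simp: power2_le_iff_abs_le)
  qed (use ab m_cont c_cont m_zero c_pos c_gt Bc H mass \<open>0 \<le> e\<close> \<open>e \<le> 1\<close> in \<open>auto simp: \<Lambda>_def\<close>)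
qed

lemma eventually_eig_s_ge:
  fixes d l :: nat and a b \<epsilon> \<delta> h \<alpha> \<beta> \<nu> :: real and m c :: "real \<Rightarrow> real"
  defines "\<Lambda> \<equiv> eig_D d c a b"
  assumes ab: "0 < a" "a < b" "a + b = 1"
    and m_cont: "continuous_on {0..1} m" and c_cont: "continuous_on {0..1} c"
    and m_zero: "\<And>r. r \<in> {a..b} \<Longrightarrow> m r = 0" and c_pos: "\<And>r. r \<in> {0..1} \<Longrightarrow> 0 < c r"
    and c_gt: "\<And>r. r \<in> {0..a} \<union> {b..1} \<Longrightarrow> \<Lambda> < c r"
    and par: "0 < \<delta>" "0 < h" "h < \<alpha>" "\<alpha> < \<beta>" "\<beta> < 1" "1 < \<nu>"
    and sums: "(\<lambda>i. \<alpha>^(Suc i + l) + \<beta>^(Suc i + l)) sums (a - \<delta>)"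
    and step: "above_step m \<delta> h \<alpha> \<beta> \<nu> l"
    and "0 < \<epsilon>"
  shows "eventually (\<lambda>s. \<Lambda> - \<epsilon> \<le> eig_s d m c s) at_top"
proof -
  define L where "L = \<bar>\<Lambda>\<bar> + 1"
  have "continuous_on {a..b} (\<lambda>r. c r - \<Lambda>)"
    using continuous_on_subset[OF c_cont] ab by (intro continuous_intros) auto
  then obtain Bc where "0 \<le> Bc" and Bc: "\<And>r. r \<in> {a..b} \<Longrightarrow> norm (c r - \<Lambda>) \<le> Bc"
    using continuous_on_compact_bound[OF compact_Icc] by blast
  define K where "K = 2 * (1 + L) / (b - a) + 4 / (b - a)^2 + 3 * Bc"
  define C\<^sub>1 where "C\<^sub>1 = 2 / (\<delta>^(d-1) * \<beta>^(l+1))"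
  define C\<^sub>2 where "C\<^sub>2 = 4 * \<beta>^(l+1) * L / ((1 - \<beta>) * \<delta>^(d-1))"
  define e where "e = min 1 (\<epsilon> / (K + 1))"
  have "0 \<le> K" "0 < C\<^sub>1" "0 < C\<^sub>2"
    using \<open>0 \<le> Bc\<close> ab par unfolding K_def C\<^sub>1_def C\<^sub>2_def L_def by (auto intro!: add_nonneg_nonneg)
  have "0 < e" "e \<le> 1"
    unfolding e_def using \<open>0 < \<epsilon>\<close> \<open>0 \<le> K\<close> by auto
  have "e * K \<le> \<epsilon> / (K + 1) * K"
    unfolding e_def using \<open>0 \<le> K\<close> by (intro mult_right_mono) auto
  also have "\<dots> \<le> \<epsilon>"
    using \<open>0 \<le> K\<close> \<open>0 < \<epsilon>\<close> by (simp add: field_simps)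
  finally have "e * K \<le> \<epsilon>" .
  have "eventually (\<lambda>s. \<exists>n. exp (- (2 * s * \<nu> * h^n)) / \<beta>^n \<le> e^2 / (C\<^sub>1 + C\<^sub>2)
      \<and> \<beta>^n * exp (2 * s * h^(n+1)) \<le> e^2 / (C\<^sub>1 + C\<^sub>2)) at_top"
    using par \<open>0 < e\<close> \<open>0 < C\<^sub>1\<close> \<open>0 < C\<^sub>2\<close> by (intro eventually_exists_small_step_terms) auto
  then show ?thesis
    using eventually_ge_at_top[of 0]
  proof eventually_elim
    case (elim s)
    then obtain n where n: "exp (- (2 * s * \<nu> * h^n)) / \<beta>^n \<le> e^2 / (C\<^sub>1 + C\<^sub>2)"
      "\<beta>^n * exp (2 * s * h^(n+1)) \<le> e^2 / (C\<^sub>1 + C\<^sub>2)"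
      by blast
    have "C\<^sub>1 * (exp (- (2 * s * \<nu> * h^n)) / \<beta>^n) + C\<^sub>2 * (\<beta>^n * exp (2 * s * h^(n+1)))
        \<le> C\<^sub>1 * (e^2 / (C\<^sub>1 + C\<^sub>2)) + C\<^sub>2 * (e^2 / (C\<^sub>1 + C\<^sub>2))"
      using n \<open>0 < C\<^sub>1\<close> \<open>0 < C\<^sub>2\<close> by (intro add_mono mult_left_mono) auto
    also have "\<dots> = (C\<^sub>1 + C\<^sub>2) * (e^2 / (C\<^sub>1 + C\<^sub>2))"
      by (simp only: distrib_right)
    also have "\<dots> = e^2"
      using \<open>0 < C\<^sub>1\<close> \<open>0 < C\<^sub>2\<close> by simp
    finally have small: "C\<^sub>1 * (exp (- (2 * s * \<nu> * h^n)) / \<beta>^n) + C\<^sub>2 * (\<beta>^n * exp (2 * s * h^(n+1))) \<le> e^2" .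
    have "\<Lambda> - e * K \<le> eig_s d m c s"
      unfolding \<Lambda>_def K_def L_def
    proof (rule eig_s_lower_bound[OF ab m_cont c_cont m_zero c_pos _ _ par sums step])
      show "\<And>r. r \<in> {0..a} \<union> {b..1} \<Longrightarrow> eig_D d c a b < c r"
        using c_gt unfolding \<Lambda>_def .
      show "\<And>r. r \<in> {a..b} \<Longrightarrow> \<bar>c r - eig_D d c a b\<bar> \<le> Bc"
        using Bc unfolding \<Lambda>_def by simp
      show "0 \<le> s" "0 \<le> e" "e \<le> 1"
        using elim \<open>0 < e\<close> \<open>e \<le> 1\<close> by auto
      show "2 / (\<delta>^(d-1) * \<beta>^(l+1)) * (exp (- (2 * s * \<nu> * h^n)) / \<beta>^n)
          + 4 * \<beta>^(l+1) * (\<bar>eig_D d c a b\<bar> + 1) / ((1 - \<beta>) * \<delta>^(d-1)) * (\<beta>^n * exp (2 * s * h^(n+1))) \<le> e^2"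
        using small unfolding C\<^sub>1_def C\<^sub>2_def L_def \<Lambda>_def .
    qed
    then show ?case
      using \<open>e * K \<le> \<epsilon>\<close> by linarith
  qed
qed

theorem lemma3p5:
  fixes d :: nat and a b :: real and m m' c :: "real \<Rightarrow> real"
  assumes "d \<ge> 1"
    and "0 < a" "a < b" "b < 1" "a + b = 1"
    and "\<forall>x\<in>{0..1}. (m has_real_derivative m' x) (at x within {0..1})"
    and "continuous_on {0..1} m'"
    and "\<not> (\<exists>k. \<forall>x\<in>{0..1}. m x = k)"
    and "continuous_on {0..1} c"
    and "\<forall>r\<in>{0..1}. m r = m (1 - r)" and "\<forall>r\<in>{a..b}. m r = 0"
    and "\<forall>r\<in>{0..1}. c r > 0"
    and "\<forall>r\<in>{0..a} \<union> {b..1}. c r > eig_D d c a b"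
    and "in_SD a m m'"
  shows "Liminf at_top (\<lambda>s. ereal (eig_s d m c s)) \<ge> ereal (eig_D d c a b)"
proof (rule Liminf_ereal_ge)
  fix \<epsilon> :: real assume "0 < \<epsilon>"
  obtain \<delta> h \<alpha> \<beta> \<nu> l where par: "0 < \<delta>" "0 < h" "h < \<alpha>" "\<alpha> < \<beta>" "\<beta> < 1" "1 < \<nu>"
    and sums: "(\<lambda>i. \<alpha>^(Suc i + l) + \<beta>^(Suc i + l)) sums (a - \<delta>)"
    and step: "above_step m \<delta> h \<alpha> \<beta> \<nu> l"
    using assms(14) unfolding in_SD_def by blast
  have m_cont: "continuous_on {0..1} m"
    using assms(6) by (auto simp: continuous_on_eq_continuous_within intro: DERIV_continuous)
  show "eventually (\<lambda>s. eig_D d c a b - \<epsilon> \<le> eig_s d m c s) at_top"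
  proof (rule eventually_eig_s_ge[OF assms(2,3,5) m_cont assms(9) _ _ _ par sums step \<open>0 < \<epsilon>\<close>])
    show "\<And>r. r \<in> {a..b} \<Longrightarrow> m r = 0" "\<And>r. r \<in> {0..1} \<Longrightarrow> 0 < c r"
      "\<And>r. r \<in> {0..a} \<union> {b..1} \<Longrightarrow> eig_D d c a b < c r"
      using assms(11-13) by auto
  qed
qed

end
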